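(* Let $s \ge \max( \|A\|^{2/3}_{L^\infty(Q_T)},s_0)$, let $B$ satisfy $\rho_0(s)B\in L^2(Q_T)$ and let $z_0\in L^2(\Omega)$. There exists a unique $p\in P$ solution of $$ (p,q)_P=\int_\Omega z_0\,q(0)+\int_{Q_T} B\, q ,\quad \forall q\in P. $$ This solution satisfies the estimate $$ \|p\|_P\le Cs^{-3/2}\big( \Vert \rho_0(s)\,B\Vert_{L^2(Q_T)} +e^{cs}\|z_0\|_{L^2(\Omega)}\big), $$ where $c:=\Vert \varphi(\cdot,0)\Vert_{L^\infty(\Omega)}$.
   Context: Let $\Omega=(0,1)$, $\omega\subset\subset\Omega$ a non-empty open set, $T>0$, $Q_T=\Omega\times(0,T)$, $q_T=\omega\times(0,T)$, $\Sigma_T=\partial\Omega\times(0,T)$, and $A\in L^\infty(Q_T)$. Carleman weights: for $s\ge1$, $\lambda\ge1$, set $\rho(x,t,s)=\exp(s\varphi(x,t))$, $\xi(x,t)=\theta(t)\exp(\lambda\widehat\psi(x))$, $\rho_0(s)=\xi^{-3/2}\rho(s)$, $\rho_1(s)=\xi^{-1}\rho(s)$. Here $\widehat\psi=\widetilde\psi+6$ with $\widetilde\psi\in C^1(\overline\Omega)$, $\widetilde\psi\in(0,1)$ in $\Omega$, $\widetilde\psi=0$ on $\partial\Omega$, $|\partial_x\widetilde\psi|>0$ in $\overline{\Omega\setminus\omega}$; $\varphi(x,t)=\theta(t)\big(\lambda\exp(12\lambda)-\exp(\lambda\widehat\psi(x))\big)$; and $\theta\in C^2([0,T))$ is defined,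 with $\mu=s\lambda^2e^{2\lambda}$ and $0<T_1<\min(1/4,3T/8)$, by $\theta(t)=1+(1-4t/T)^\mu$ on $[0,T/4]$, $\theta=1$ on $[T/4,T-2T_1]$, $\theta$ increasing on $[T-2T_1,T-T_1]$, $\theta(t)=1/(T-t)$ on $[T-T_1,T)$. One has $1<\rho_0\le\rho_1\le\rho$. $\lambda_0\ge1$ and $s_0\ge1$ are constants such that for $\lambda=\lambda_0$ and all $s\ge\max(\|A\|^{2/3}_{L^\infty(Q_T)},s_0)$ the Carleman estimate holds: for all $p\in P_0:=\{q\in C^2(\overline{Q_T}): q=0 \text{ on }\Sigma_T\}$, $$\int_\Omega\rho^{-2}(0,s)|\partial_x p(0)|^2+s^3\lambda_0^4e^{14\lambda_0}\int_\Omega\rho^{-2}(0,s)|p(0)|^2+s\lambda_0^2\int_{Q_T}\rho_1^{-2}(s)|\partial_xp|^2+s^3\lambda_0^4\int_{Q_T}\rho_0^{-2}(s)|p|^2\le C\int_{Q_T}\rho^{-2}(s)|L_A^\star p|^2+Cs^3\lambda_0^4\int_{q_T}\rho_0^{-2}(s)|p|^2,$$ where $L^\star_A q:=-\partial_t q-\partial_{xx}q+Aq$. On $P_0$ define the scalar product $(p,q)_P:=\int_{Q_T}\rho^{-2}(s)L^\star_Ap\,L^\star_Aq+s^3\lambda_0^4\int_{q_T}\rho_0^{-2}(s)p\,q$, and let $P$ be the completion of $P_0$ for the associated norm $\|\cdot\|_P$ (a Hilbert space); by density the Carleman estimate (with right-hand side $C\|p\|_P^2$) holds for all $p\in P$.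 $C$ denotes a constant depending only on $\Omega,\omega,\lambda_0,T$. *)

theory Defs
  imports "HOL-Probability.Probability"
begin

definition Omega :: "real set" where "Omega = {0<..<1}"
definition QT :: "real \<Rightarrow> (real \<times> real) set" where "QT T = Omega \<times> {0<..<T}"
definition qT :: "real set \<Rightarrow> real \<Rightarrow> (real \<times> real) set" where "qT \<omega> T = \<omega> \<times> {0<..<T}"
definition SigmaT :: "real \<Rightarrow> (real \<times> real) set" where "SigmaT T = {0,1} \<times> {0<..<T}"

definition dx :: "(real \<times> real \<Rightarrow> real) \<Rightarrow> real \<times> real \<Rightarrow> real" where
  "dx f y = deriv (\<lambda>x'. f (x', snd y)) (fst y)"
definition dt :: "(real \<times> real \<Rightarrow> real) \<Rightarrow> real \<times> real \<Rightarrow> real" where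
  "dt f y = deriv (\<lambda>t'. f (fst y, t')) (snd y)"

definition partials_exist :: "(real \<times> real \<Rightarrow> real) \<Rightarrow> bool" where
  "partials_exist f \<longleftrightarrow> (\<forall>y. (\<lambda>x'. f (x', snd y)) differentiable (at (fst y))
                           \<and> (\<lambda>t'. f (fst y, t')) differentiable (at (snd y)))"

text \<open>C^2 functions of (x,t) (on the whole plane; their restrictions to the closed
  rectangle are exactly C^2(closure Q_T)).\<close>
definition C2 :: "(real \<times> real \<Rightarrow> real) \<Rightarrow> bool" where
  "C2 f \<longleftrightarrow> partials_exist f \<and> partials_exist (dx f) \<and> partials_exist (dt f)
     \<and> continuous_on UNIV f \<and> continuous_on UNIV (dx f) \<and> continuous_on UNIV (dt f)
     \<and> continuous_on UNIV (dx (dx f)) \<and> continuous_on UNIV (dx (dt f))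
     \<and> continuous_on UNIV (dt (dx f)) \<and> continuous_on UNIV (dt (dt f))"

definition P0 :: "real \<Rightarrow> (real \<times> real \<Rightarrow> real) set" where
  "P0 T = {p. C2 p \<and> (\<forall>y\<in>SigmaT T. p y = 0)}"

definition C2_on :: "(real \<Rightarrow> real) \<Rightarrow> real set \<Rightarrow> bool" where
  "C2_on f S \<longleftrightarrow> (\<exists>f1 f2. (\<forall>t\<in>S. (f has_real_derivative f1 t) (at t within S)
                           \<and> (f1 has_real_derivative f2 t) (at t within S))
                       \<and> continuous_on S f2)"

definition isLinf :: "('a::euclidean_space) set \<Rightarrow> ('a \<Rightarrow> real) \<Rightarrow> bool" where
  "isLinf S f \<longleftrightarrow> f \<in> borel_measurable (restrict_space lebesgue S)
      \<and> esssup (restrict_space lebesgue S) (\<lambda>y. ereal \<bar>f y\<bar>) < \<infinity>"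
definition normLinf :: "('a::euclidean_space) set \<Rightarrow> ('a \<Rightarrow> real) \<Rightarrow> real" where
  "normLinf S f = real_of_ereal (esssup (restrict_space lebesgue S) (\<lambda>y. ereal \<bar>f y\<bar>))"
definition isL2 :: "('a::euclidean_space) set \<Rightarrow> ('a \<Rightarrow> real) \<Rightarrow> bool" where
  "isL2 S f \<longleftrightarrow> f \<in> borel_measurable (restrict_space lebesgue S)
      \<and> set_integrable lebesgue S (\<lambda>y. (f y)\<^sup>2)"
definition normL2 :: "('a::euclidean_space) set \<Rightarrow> ('a \<Rightarrow> real) \<Rightarrow> real" where
  "normL2 S f = sqrt (LINT y:S|lebesgue. (f y)\<^sup>2)"

section \<open>Carleman weights (th s t is theta(t) for the parameter s, lam = lambda)\<close>

definition psihat :: "(real \<Rightarrow> real) \<Rightarrow> real \<Rightarrow> real" where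
  "psihat psi x = psi x + 6"
definition xi :: "(real \<Rightarrow> real \<Rightarrow> real) \<Rightarrow> real \<Rightarrow> (real \<Rightarrow> real) \<Rightarrow> real \<Rightarrow> real \<times> real \<Rightarrow> real" where
  "xi th lam psi s y = th s (snd y) * exp (lam * psihat psi (fst y))"
definition phi :: "(real \<Rightarrow> real \<Rightarrow> real) \<Rightarrow> real \<Rightarrow> (real \<Rightarrow> real) \<Rightarrow> real \<Rightarrow> real \<times> real \<Rightarrow> real" where
  "phi th lam psi s y = th s (snd y) * (lam * exp (12 * lam) - exp (lam * psihat psi (fst y)))"
definition rho :: "(real \<Rightarrow> real \<Rightarrow> real) \<Rightarrow> real \<Rightarrow> (real \<Rightarrow> real) \<Rightarrow> real \<Rightarrow> real \<times> real \<Rightarrow> real" where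
  "rho th lam psi s y = exp (s * phi th lam psi s y)"
definition rho0 :: "(real \<Rightarrow> real \<Rightarrow> real) \<Rightarrow> real \<Rightarrow> (real \<Rightarrow> real) \<Rightarrow> real \<Rightarrow> real \<times> real \<Rightarrow> real" where
  "rho0 th lam psi s y = xi th lam psi s y powr (-3/2) * rho th lam psi s y"
definition rho1 :: "(real \<Rightarrow> real \<Rightarrow> real) \<Rightarrow> real \<Rightarrow> (real \<Rightarrow> real) \<Rightarrow> real \<Rightarrow> real \<times> real \<Rightarrow> real" where
  "rho1 th lam psi s y = xi th lam psi s y powr (-1) * rho th lam psi s y"

definition Lstar :: "(real \<times> real \<Rightarrow> real) \<Rightarrow> (real \<times> real \<Rightarrow> real) \<Rightarrow> real \<times> real \<Rightarrow> real" where
  "Lstar A q y = - dt q y - dx (dx q) y + A y * q y"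

definition ipP0 :: "real \<Rightarrow> real set \<Rightarrow> (real \<Rightarrow> real \<Rightarrow> real) \<Rightarrow> real \<Rightarrow> (real \<Rightarrow> real)
     \<Rightarrow> (real \<times> real \<Rightarrow> real) \<Rightarrow> real \<Rightarrow> (real \<times> real \<Rightarrow> real) \<Rightarrow> (real \<times> real \<Rightarrow> real) \<Rightarrow> real" where
  "ipP0 T \<omega> th lam psi A s p q =
     (LINT y:QT T|lebesgue. (1 / (rho th lam psi s y)\<^sup>2) * Lstar A p y * Lstar A q y)
     + s ^ 3 * lam ^ 4 * (LINT y:qT \<omega> T|lebesgue. (1 / (rho0 th lam psi s y)\<^sup>2) * p y * q y)"

definition carleman_lhs :: "real \<Rightarrow> (real \<Rightarrow> real \<Rightarrow> real) \<Rightarrow> real \<Rightarrow> (real \<Rightarrow> real) \<Rightarrow> real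
     \<Rightarrow> (real \<times> real \<Rightarrow> real) \<Rightarrow> real" where
  "carleman_lhs T th lam psi s p =
     (LINT x:Omega|lebesgue. (1 / (rho th lam psi s (x, 0))\<^sup>2) * (dx p (x, 0))\<^sup>2)
     + s ^ 3 * lam ^ 4 * exp (14 * lam) * (LINT x:Omega|lebesgue. (1 / (rho th lam psi s (x, 0))\<^sup>2) * (p (x, 0))\<^sup>2)
     + s * lam ^ 2 * (LINT y:QT T|lebesgue. (1 / (rho1 th lam psi s y)\<^sup>2) * (dx p y)\<^sup>2)
     + s ^ 3 * lam ^ 4 * (LINT y:QT T|lebesgue. (1 / (rho0 th lam psi s y)\<^sup>2) * (p y)\<^sup>2)"

section \<open>The completion P of P0: Cauchy sequences modulo null sequences\<close>

definition P_Cauchy :: "'f set \<Rightarrow> ('f::minus \<Rightarrow> 'f \<Rightarrow> real) \<Rightarrow> (nat \<Rightarrow> 'f) \<Rightarrow> bool" where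
  "P_Cauchy S ip X \<longleftrightarrow> (\<forall>n. X n \<in> S) \<and>
     (\<forall>e>0. \<exists>N. \<forall>m\<ge>N. \<forall>n\<ge>N. sqrt (ip (X m - X n) (X m - X n)) < e)"
definition P_equiv :: "('f::minus \<Rightarrow> 'f \<Rightarrow> real) \<Rightarrow> (nat \<Rightarrow> 'f) \<Rightarrow> (nat \<Rightarrow> 'f) \<Rightarrow> bool" where
  "P_equiv ip X Y \<longleftrightarrow> (\<lambda>n. sqrt (ip (X n - Y n) (X n - Y n))) \<longlonglongrightarrow> 0"
definition P_inner :: "('f \<Rightarrow> 'f \<Rightarrow> real) \<Rightarrow> (nat \<Rightarrow> 'f) \<Rightarrow> (nat \<Rightarrow> 'f) \<Rightarrow> real" where
  "P_inner ip X Y = lim (\<lambda>n. ip (X n) (Y n))"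
definition P_norm :: "('f \<Rightarrow> 'f \<Rightarrow> real) \<Rightarrow> (nat \<Rightarrow> 'f) \<Rightarrow> real" where
  "P_norm ip X = sqrt (P_inner ip X X)"
definition P_ext :: "('f \<Rightarrow> real) \<Rightarrow> (nat \<Rightarrow> 'f) \<Rightarrow> real" where
  "P_ext l Y = lim (\<lambda>n. l (Y n))"

definition rhs_functional :: "real \<Rightarrow> (real \<Rightarrow> real) \<Rightarrow> (real \<times> real \<Rightarrow> real) \<Rightarrow> (real \<times> real \<Rightarrow> real) \<Rightarrow> real" where
  "rhs_functional T z0 B q = (LINT x:Omega|lebesgue. z0 x * q (x, 0)) + (LINT y:QT T|lebesgue. B y * q y)"

end

theory Submission
  imports Defs
begin

text \<open>
  On \<open>P0\<close> the form \<open>(p, q)\<^sub>P\<close> is a positive semidefinite scalar product, and the Carleman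
  estimate bounds \<open>s\<^sup>3 \<lambda>\<^sup>4\<close> times the weighted \<open>L\<^sup>2\<close> norms of \<open>\<rho>\<^sub>0\<^sup>-\<^sup>1 p\<close> on \<open>Q\<^sub>T\<close> and of
  \<open>\<rho>(0)\<^sup>-\<^sup>1 p(0)\<close> on \<open>\<Omega>\<close> by \<open>\<parallel>p\<parallel>\<^sub>P\<^sup>2\<close>. Writing \<open>B q = (\<rho>\<^sub>0 B)(\<rho>\<^sub>0\<^sup>-\<^sup>1 q)\<close> and using
  \<open>\<rho>(x, 0) \<le> e\<^sup>c\<^sup>s\<close>, Cauchy-Schwarz shows that \<open>\<ell>(q) = \<integral>z\<^sub>0 q(0) + \<integral>B q\<close> is a linear
  functional with \<open>|\<ell>(q)| \<le> C s\<^sup>-\<^sup>3\<^sup>/\<^sup>2 (\<parallel>\<rho>\<^sub>0 B\<parallel> + e\<^sup>c\<^sup>s \<parallel>z\<^sub>0\<parallel>) \<parallel>q\<parallel>\<^sub>P\<close>.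

  The solution is the Riesz representative of \<open>\<ell>\<close> in the completion \<open>P\<close>, obtained by the
  Dirichlet principle: a minimizing sequence of the energy \<open>\<parallel>q\<parallel>\<^sub>P\<^sup>2/2 - \<ell>(q)\<close> on \<open>P0\<close> is
  Cauchy by the parallelogram law, represents \<open>\<ell>\<close> by the first variation of the energy, and
  has norm at most the bound of \<open>\<ell>\<close>. Two representatives differ by a null sequence.
\<close>

section \<open>Semi-inner products and the Riesz representation in the completion\<close>

lemma abs_le_sqrt_mult_if_quadratic_nonneg:
  fixes a b c :: real
  assumes nonneg: "\<And>t. 0 \<le> a + 2 * t * b + t\<^sup>2 * c" and "a \<ge> 0" "c \<ge> 0"
  shows "\<bar>b\<bar> \<le> sqrt a * sqrt c"
proof -
  have "b\<^sup>2 \<le> a * c"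
  proof (cases "c = 0")
    case True
    show ?thesis
    proof (rule ccontr)
      assume "\<not> ?thesis"
      then have "b \<noteq> 0" using True by simp
      have "0 \<le> a + 2 * (-(a + 1) / (2 * b)) * b" using nonneg[of "-(a + 1) / (2 * b)"] True by simp
      also have "\<dots> = -1" using \<open>b \<noteq> 0\<close> by (simp add: field_simps)
      finally show False by simp
    qed
  next
    case False
    then have "c > 0" using assms by simp
    have "0 \<le> a + 2 * (-b / c) * b + (-b / c)\<^sup>2 * c" by (rule nonneg)
    also have "\<dots> = a - b\<^sup>2 / c" using \<open>c > 0\<close> by (simp add: field_simps power2_eq_square)
    finally show ?thesis using \<open>c > 0\<close> by (simp add: field_simps)
  qed
  then have "sqrt (b\<^sup>2) \<le> sqrt (a * c)" by (simp only: real_sqrt_le_iff)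
  then show ?thesis by (simp add: real_sqrt_mult)
qed

definition lincomb :: "real \<Rightarrow> ('a \<Rightarrow> real) \<Rightarrow> real \<Rightarrow> ('a \<Rightarrow> real) \<Rightarrow> 'a \<Rightarrow> real" where
  "lincomb a u b v = (\<lambda>y. a * u y + b * v y)"

locale semi_inner_space =
  fixes S :: "('a \<Rightarrow> real) set" and ip :: "('a \<Rightarrow> real) \<Rightarrow> ('a \<Rightarrow> real) \<Rightarrow> real"
  assumes zero_in: "(\<lambda>_. 0) \<in> S"
    and lincomb_in: "\<And>u v a b. u \<in> S \<Longrightarrow> v \<in> S \<Longrightarrow> lincomb a u b v \<in> S"
    and ip_commute: "\<And>u v. u \<in> S \<Longrightarrow> v \<in> S \<Longrightarrow> ip u v = ip v u"
    and ip_lincomb_left: "\<And>u v w a b. u \<in> S \<Longrightarrow> v \<in> S \<Longrightarrow> w \<in> S \<Longrightarrow>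
      ip (lincomb a u b v) w = a * ip u w + b * ip v w"
    and ip_self_nonneg: "\<And>u. u \<in> S \<Longrightarrow> ip u u \<ge> 0"
begin

definition seminorm :: "('a \<Rightarrow> real) \<Rightarrow> real" where
  "seminorm u = sqrt (ip u u)"

lemma diff_eq_lincomb: "u - v = lincomb 1 u (-1) v"
  by (auto simp: lincomb_def fun_eq_iff)

lemma diff_in: "u \<in> S \<Longrightarrow> v \<in> S \<Longrightarrow> u - v \<in> S"
  by (simp add: diff_eq_lincomb lincomb_in)

lemma ip_lincomb_right:
  "u \<in> S \<Longrightarrow> v \<in> S \<Longrightarrow> w \<in> S \<Longrightarrow> ip w (lincomb a u b v) = a * ip w u + b * ip w v"
  using ip_commute ip_lincomb_left lincomb_in by metis

lemma ip_diff_left: "u \<in> S \<Longrightarrow> v \<in> S \<Longrightarrow> w \<in> S \<Longrightarrow> ip (u - v) w = ip u w - ip v w"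
  by (simp add: diff_eq_lincomb ip_lincomb_left)

lemma ip_diff_right: "u \<in> S \<Longrightarrow> v \<in> S \<Longrightarrow> w \<in> S \<Longrightarrow> ip w (u - v) = ip w u - ip w v"
  by (simp add: diff_eq_lincomb ip_lincomb_right)

lemma seminorm_nonneg: "u \<in> S \<Longrightarrow> seminorm u \<ge> 0"
  by (simp add: seminorm_def ip_self_nonneg)

lemma seminorm_sq: "u \<in> S \<Longrightarrow> (seminorm u)\<^sup>2 = ip u u"
  by (simp add: seminorm_def ip_self_nonneg)

lemma ip_lincomb_self: "u \<in> S \<Longrightarrow> v \<in> S \<Longrightarrow>
   ip (lincomb a u b v) (lincomb a u b v) = a\<^sup>2 * ip u u + 2 * a * b * ip u v + b\<^sup>2 * ip v v"
  using ip_lincomb_left ip_lincomb_right lincomb_in ip_commute[of u v]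
  by (simp add: algebra_simps power2_eq_square)

lemma cauchy_schwarz:
  assumes "u \<in> S" "v \<in> S"
  shows "\<bar>ip u v\<bar> \<le> seminorm u * seminorm v"
proof -
  have "0 \<le> ip u u + 2 * t * ip u v + t\<^sup>2 * ip v v" for t
    using ip_self_nonneg[OF lincomb_in[OF assms, of 1 t]] ip_lincomb_self[OF assms, of 1 t] by simp
  then show ?thesis
    unfolding seminorm_def
    by (rule abs_le_sqrt_mult_if_quadratic_nonneg) (use ip_self_nonneg assms in auto)
qed

lemma seminorm_lincomb_le:
  assumes "u \<in> S" "v \<in> S"
  shows "seminorm (lincomb 1 u t v) \<le> seminorm u + \<bar>t\<bar> * seminorm v"
proof -
  have "t * ip u v \<le> \<bar>t\<bar> * (seminorm u * seminorm v)"
    using cauchy_schwarz[OF assms] abs_ge_self[of "t * ip u v"]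
    by (metis abs_ge_zero abs_mult mult_left_mono order_trans)
  then have "ip (lincomb 1 u t v) (lincomb 1 u t v) \<le> (seminorm u + \<bar>t\<bar> * seminorm v)\<^sup>2"
    using ip_lincomb_self[OF assms, of 1 t] seminorm_sq[OF assms(1)] seminorm_sq[OF assms(2)]
    by (simp add: power2_eq_square algebra_simps)
  then show ?thesis
    unfolding seminorm_def[of "lincomb 1 u t v"]
    by (intro real_le_lsqrt) (use seminorm_nonneg assms in auto)
qed

lemma seminorm_diff_le: "u \<in> S \<Longrightarrow> v \<in> S \<Longrightarrow> seminorm (u - v) \<le> seminorm u + seminorm v"
  using seminorm_lincomb_le[of u v "-1"] by (simp add: diff_eq_lincomb)

lemma seminorm_le_add_diff:
  assumes "u \<in> S" "v \<in> S"
  shows "seminorm u \<le> seminorm v + seminorm (u - v)"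
proof -
  have "u = lincomb 1 v 1 (u - v)" by (simp add: lincomb_def fun_eq_iff)
  then show ?thesis using seminorm_lincomb_le[of v "u - v" 1] diff_in assms by simp
qed

lemma ip_diff_estimate:
  assumes "u \<in> S" "u' \<in> S" "v \<in> S" "v' \<in> S"
  shows "\<bar>ip u v - ip u' v'\<bar> \<le> seminorm (u - u') * seminorm v + seminorm u' * seminorm (v - v')"
proof -
  have "ip u v - ip u' v' = ip (u - u') v + ip u' (v - v')"
    using ip_diff_left[of u u' v] ip_diff_right[of v v' u'] assms by simp
  then show ?thesis
    using cauchy_schwarz[of "u - u'" v] cauchy_schwarz[of u' "v - v'"] diff_in assms by simp
qed

lemma P_Cauchy_iff: "P_Cauchy S ip X \<longleftrightarrow>
    (\<forall>n. X n \<in> S) \<and> (\<forall>e>0. \<exists>N. \<forall>m\<ge>N. \<forall>n\<ge>N. seminorm (X m - X n) < e)"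
  by (simp add: P_Cauchy_def seminorm_def)

lemma P_Cauchy_in: "P_Cauchy S ip X \<Longrightarrow> X n \<in> S"
  by (simp add: P_Cauchy_iff)

lemma P_Cauchy_bounded:
  assumes "P_Cauchy S ip X"
  obtains B where "\<And>n. seminorm (X n) \<le> B"
proof -
  from assms obtain N where N: "\<And>m n. m \<ge> N \<Longrightarrow> n \<ge> N \<Longrightarrow> seminorm (X m - X n) < 1"
    unfolding P_Cauchy_iff by (meson zero_less_one)
  have X: "\<And>n. X n \<in> S" using P_Cauchy_in[OF assms] .
  have head: "seminorm (X n) \<le> (\<Sum>k\<le>N. seminorm (X k))" if "n \<le> N" for n
    using that by (intro member_le_sum) (auto simp: seminorm_nonneg X)
  have "seminorm (X n) \<le> (\<Sum>k\<le>N. seminorm (X k)) + 1" for n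
  proof (cases "n \<le> N")
    case False
    then show ?thesis
      using seminorm_le_add_diff[OF X X, of n N] N[of n N] head[of N] by simp
  qed (use head in force)
  then show ?thesis using that by blast
qed

lemma P_Cauchy_diff:
  assumes X: "P_Cauchy S ip X" and Y: "P_Cauchy S ip Y"
  shows "P_Cauchy S ip (\<lambda>n. X n - Y n)"
  unfolding P_Cauchy_iff
proof (intro conjI allI impI)
  show "X n - Y n \<in> S" for n using diff_in P_Cauchy_in X Y by blast
  fix e :: real assume "e > 0"
  then obtain N1 N2 where N1: "\<And>m n. m \<ge> N1 \<Longrightarrow> n \<ge> N1 \<Longrightarrow> seminorm (X m - X n) < e / 2"
    and N2: "\<And>m n. m \<ge> N2 \<Longrightarrow> n \<ge> N2 \<Longrightarrow> seminorm (Y m - Y n) < e / 2"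
    using X Y unfolding P_Cauchy_iff by (meson half_gt_zero)
  show "\<exists>N. \<forall>m\<ge>N. \<forall>n\<ge>N. seminorm ((X m - Y m) - (X n - Y n)) < e"
  proof (intro exI allI impI)
    fix m n assume "max N1 N2 \<le> m" "max N1 N2 \<le> n"
    moreover have "(X m - Y m) - (X n - Y n) = (X m - X n) - (Y m - Y n)"
      by (simp add: fun_eq_iff)
    moreover have "seminorm ((X m - X n) - (Y m - Y n)) \<le> seminorm (X m - X n) + seminorm (Y m - Y n)"
      using seminorm_diff_le diff_in P_Cauchy_in X Y by blast
    ultimately show "seminorm ((X m - Y m) - (X n - Y n)) < e"
      using N1[of m n] N2[of m n] by simp
  qed
qed

lemma P_Cauchy_ip_convergent:
  assumes X: "P_Cauchy S ip X" and Y: "P_Cauchy S ip Y"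
  shows "convergent (\<lambda>n. ip (X n) (Y n))"
proof -
  obtain BX BY where BX: "\<And>n. seminorm (X n) \<le> BX" and BY: "\<And>n. seminorm (Y n) \<le> BY"
    using P_Cauchy_bounded X Y by metis
  have XS: "\<And>n. X n \<in> S" and YS: "\<And>n. Y n \<in> S" using X Y P_Cauchy_in by blast+
  have B0: "BX \<ge> 0" "BY \<ge> 0"
    using order_trans[OF seminorm_nonneg[OF XS] BX] order_trans[OF seminorm_nonneg[OF YS] BY] by auto
  have "Cauchy (\<lambda>n. ip (X n) (Y n))"
    unfolding Cauchy_def
  proof (intro allI impI)
    fix e :: real assume "e > 0"
    define d where "d = e / (BX + BY + 1)"
    have "d > 0" using \<open>e > 0\<close> B0 by (simp add: d_def)
    then obtain N1 N2 where N1: "\<And>m n. m \<ge> N1 \<Longrightarrow> n \<ge> N1 \<Longrightarrow> seminorm (X m - X n) < d"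
      and N2: "\<And>m n. m \<ge> N2 \<Longrightarrow> n \<ge> N2 \<Longrightarrow> seminorm (Y m - Y n) < d"
      using X Y unfolding P_Cauchy_iff by meson
    show "\<exists>N. \<forall>m\<ge>N. \<forall>n\<ge>N. dist (ip (X m) (Y m)) (ip (X n) (Y n)) < e"
    proof (intro exI allI impI)
      fix m n assume "max N1 N2 \<le> m" "max N1 N2 \<le> n"
      then have "seminorm (X m - X n) \<le> d" "seminorm (Y m - Y n) \<le> d"
        using N1[of m n] N2[of m n] by auto
      then have "seminorm (X m - X n) * seminorm (Y m) \<le> d * BY"
        and "seminorm (X n) * seminorm (Y m - Y n) \<le> BX * d"
        using B0 \<open>d > 0\<close> by (auto intro!: mult_mono BX BY seminorm_nonneg diff_in XS YS)
      moreover have "d * BY + BX * d = d * (BX + BY + 1) - d" by (simp add: algebra_simps)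
      moreover have "d * (BX + BY + 1) = e" using B0 by (simp add: d_def)
      ultimately show "dist (ip (X m) (Y m)) (ip (X n) (Y n)) < e"
        using ip_diff_estimate[OF XS[of m] XS[of n] YS[of m] YS[of n]] \<open>d > 0\<close>
        unfolding dist_real_def by linarith
    qed
  qed
  then show ?thesis by (simp add: Cauchy_convergent_iff)
qed

lemma P_Cauchy_ip_LIMSEQ:
  "P_Cauchy S ip X \<Longrightarrow> P_Cauchy S ip Y \<Longrightarrow> (\<lambda>n. ip (X n) (Y n)) \<longlonglongrightarrow> P_inner ip X Y"
  unfolding P_inner_def using P_Cauchy_ip_convergent by (simp add: convergent_LIMSEQ_iff)

end

locale bounded_functional = semi_inner_space +
  fixes f :: "('a \<Rightarrow> real) \<Rightarrow> real" and M :: real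
  assumes f_lincomb: "\<And>u v a b. u \<in> S \<Longrightarrow> v \<in> S \<Longrightarrow> f (lincomb a u b v) = a * f u + b * f v"
    and f_bounded: "\<And>u. u \<in> S \<Longrightarrow> \<bar>f u\<bar> \<le> M * seminorm u"
    and M_nonneg: "M \<ge> 0"
begin

lemma f_diff: "u \<in> S \<Longrightarrow> v \<in> S \<Longrightarrow> f (u - v) = f u - f v"
  using f_lincomb[of u v 1 "-1"] by (simp add: diff_eq_lincomb)

lemma f_P_Cauchy_convergent:
  assumes Y: "P_Cauchy S ip Y"
  shows "convergent (\<lambda>n. f (Y n))"
proof -
  have YS: "\<And>n. Y n \<in> S" using P_Cauchy_in[OF Y] .
  have "Cauchy (\<lambda>n. f (Y n))"
    unfolding Cauchy_def
  proof (intro allI impI)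
    fix e :: real assume "e > 0"
    then obtain N where N: "\<And>m n. m \<ge> N \<Longrightarrow> n \<ge> N \<Longrightarrow> seminorm (Y m - Y n) < e / (M + 1)"
      using Y M_nonneg unfolding P_Cauchy_iff by (meson divide_pos_pos add_nonneg_pos zero_less_one)
    show "\<exists>N. \<forall>m\<ge>N. \<forall>n\<ge>N. dist (f (Y m)) (f (Y n)) < e"
    proof (intro exI allI impI)
      fix m n assume "N \<le> m" "N \<le> n"
      have "dist (f (Y m)) (f (Y n)) = \<bar>f (Y m - Y n)\<bar>" using YS f_diff by (simp add: dist_real_def)
      also have "\<dots> \<le> M * seminorm (Y m - Y n)" using f_bounded YS diff_in by blast
      also have "\<dots> \<le> M * (e / (M + 1))"
        using N[OF \<open>N \<le> m\<close> \<open>N \<le> n\<close>] M_nonneg by (intro mult_left_mono) auto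
      also have "\<dots> < e" using M_nonneg \<open>e > 0\<close> by (simp add: field_simps)
      finally show "dist (f (Y m)) (f (Y n)) < e" .
    qed
  qed
  then show ?thesis by (simp add: Cauchy_convergent_iff)
qed

definition energy :: "('a \<Rightarrow> real) \<Rightarrow> real" where
  "energy u = ip u u / 2 - f u"

definition min_energy :: real where
  "min_energy = Inf (energy ` S)"

lemma energy_ge: "u \<in> S \<Longrightarrow> - M\<^sup>2 / 2 \<le> energy u"
  using f_bounded[of u] seminorm_sq[of u] abs_ge_self[of "f u"] zero_le_power2[of "seminorm u - M"]
  unfolding energy_def by (simp add: power2_eq_square algebra_simps)

lemma min_energy_le: "u \<in> S \<Longrightarrow> min_energy \<le> energy u"
  unfolding min_energy_def using energy_ge by (auto intro!: cInf_lower bdd_belowI)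

lemma ex_near_min_energy: "\<exists>u\<in>S. energy u < min_energy + 1 / (real n + 1)"
proof -
  have "\<exists>x\<in>energy ` S. x < min_energy + 1 / (real n + 1)"
    unfolding min_energy_def by (rule cInf_lessD) (use zero_in in auto)
  then show ?thesis by blast
qed

definition minimizing_seq :: "nat \<Rightarrow> 'a \<Rightarrow> real" where
  "minimizing_seq n = (SOME u. u \<in> S \<and> energy u < min_energy + 1 / (real n + 1))"

lemma minimizing_seq:
  "minimizing_seq n \<in> S" "energy (minimizing_seq n) < min_energy + 1 / (real n + 1)"
  using someI_ex[OF ex_near_min_energy[of n, unfolded Bex_def]]
  unfolding minimizing_seq_def by blast+

lemma energy_parallelogram:
  assumes "u \<in> S" "v \<in> S"
  shows "(seminorm (u - v))\<^sup>2 / 4 = energy u + energy v - 2 * energy (lincomb (1/2) u (1/2) v)"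
proof -
  have "(seminorm (u - v))\<^sup>2 = ip u u - 2 * ip u v + ip v v"
    using assms diff_in seminorm_sq ip_diff_left ip_diff_right ip_commute[of u v] by simp
  moreover have "ip (lincomb (1/2) u (1/2) v) (lincomb (1/2) u (1/2) v) = (ip u u + 2 * ip u v + ip v v) / 4"
    using ip_lincomb_self[OF assms, of "1/2" "1/2"] by (simp add: power2_eq_square field_simps)
  moreover have "f (lincomb (1/2) u (1/2) v) = (f u + f v) / 2" using f_lincomb[OF assms] by simp
  ultimately show ?thesis unfolding energy_def by (simp add: field_simps)
qed

lemma minimizing_seq_Cauchy: "P_Cauchy S ip minimizing_seq"
  unfolding P_Cauchy_iff
proof (intro conjI allI impI)
  show "minimizing_seq n \<in> S" for n by (rule minimizing_seq)
  fix e :: real assume "e > 0"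
  obtain N :: nat where N: "8 / e\<^sup>2 < real N" using reals_Archimedean2 by blast
  show "\<exists>N. \<forall>m\<ge>N. \<forall>n\<ge>N. seminorm (minimizing_seq m - minimizing_seq n) < e"
  proof (intro exI allI impI)
    fix i j assume "N \<le> i" "N \<le> j"
    then have "1 / (real i + 1) \<le> 1 / (real N + 1)" "1 / (real j + 1) \<le> 1 / (real N + 1)"
      by (simp_all add: frac_le)
    then have "(seminorm (minimizing_seq i - minimizing_seq j))\<^sup>2 / 4 \<le> 2 / (real N + 1)"
      using energy_parallelogram[OF minimizing_seq(1) minimizing_seq(1), of i j]
        minimizing_seq(2)[of i] minimizing_seq(2)[of j]
        min_energy_le[OF lincomb_in[OF minimizing_seq(1)[of i] minimizing_seq(1)[of j], of "1/2" "1/2"]]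
      by linarith
    also have "2 / (real N + 1) < e\<^sup>2 / 4"
    proof -
      have "8 / e\<^sup>2 < real N + 1" using N by linarith
      then show ?thesis using \<open>e > 0\<close> by (simp add: field_simps)
    qed
    finally have "(seminorm (minimizing_seq i - minimizing_seq j))\<^sup>2 < e\<^sup>2" by simp
    then show "seminorm (minimizing_seq i - minimizing_seq j) < e"
      using \<open>e > 0\<close> by (simp add: power_less_imp_less_base)
  qed
qed

text \<open>First variation of the energy: along the line through the near-minimizer
  \<open>minimizing_seq n\<close> in direction \<open>q\<close> the energy is a quadratic in \<open>t\<close> that stays above its
  infimum, so its linear coefficient is controlled by the excess energy.\<close>

lemma minimizing_seq_almost_solves:
  assumes q: "q \<in> S"
  shows "\<bar>ip (minimizing_seq n) q - f q\<bar> \<le> sqrt (2 / (real n + 1)) * seminorm q"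
proof -
  define X where "X = minimizing_seq n"
  define eps where "eps = energy X - min_energy"
  have X: "X \<in> S" unfolding X_def by (rule minimizing_seq)
  have eps: "0 \<le> eps" "eps \<le> 1 / (real n + 1)"
    using min_energy_le[OF X] minimizing_seq(2)[of n] by (simp_all add: eps_def X_def)
  have "0 \<le> eps + 2 * t * ((ip X q - f q) / 2) + t\<^sup>2 * (ip q q / 2)" for t
  proof -
    have "energy (lincomb 1 X t q) = energy X + t * (ip X q - f q) + t\<^sup>2 * ip q q / 2"
      unfolding energy_def using ip_lincomb_self[OF X q, of 1 t] f_lincomb[OF X q, of 1 t]
      by (simp add: field_simps)
    then show ?thesis using min_energy_le[OF lincomb_in[OF X q, of 1 t]] by (simp add: eps_def field_simps)
  qed
  then have "\<bar>(ip X q - f q) / 2\<bar> \<le> sqrt eps * sqrt (ip q q / 2)"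
    by (rule abs_le_sqrt_mult_if_quadratic_nonneg) (use eps ip_self_nonneg[OF q] in auto)
  then have "\<bar>ip X q - f q\<bar> \<le> (2 / sqrt 2) * sqrt eps * seminorm q"
    by (simp add: seminorm_def real_sqrt_divide mult_ac)
  also have "\<dots> = sqrt (2 * eps) * seminorm q"
    by (simp add: real_div_sqrt real_sqrt_mult)
  also have "\<dots> \<le> sqrt (2 / (real n + 1)) * seminorm q"
    using eps seminorm_nonneg[OF q] by (intro mult_right_mono) auto
  finally show ?thesis unfolding X_def .
qed

lemma minimizing_seq_represents:
  assumes Y: "P_Cauchy S ip Y"
  shows "(\<lambda>n. ip (minimizing_seq n) (Y n)) \<longlonglongrightarrow> lim (\<lambda>n. f (Y n))"
proof -
  obtain B where B: "\<And>n. seminorm (Y n) \<le> B" by (metis P_Cauchy_bounded[OF Y])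
  have bound: "\<bar>ip (minimizing_seq n) (Y n) - f (Y n)\<bar> \<le> sqrt (2 / (real n + 1)) * B" for n
  proof -
    have "\<bar>ip (minimizing_seq n) (Y n) - f (Y n)\<bar> \<le> sqrt (2 / (real n + 1)) * seminorm (Y n)"
      by (rule minimizing_seq_almost_solves[OF P_Cauchy_in[OF Y]])
    also have "\<dots> \<le> sqrt (2 / (real n + 1)) * B" by (intro mult_left_mono B) simp
    finally show ?thesis .
  qed
  have "(\<lambda>n. 2 / (real n + 1)) \<longlonglongrightarrow> 0"
    using tendsto_mult_right_zero[OF LIMSEQ_inverse_real_of_nat, of 2]
    by (simp add: divide_inverse add.commute)
  from tendsto_mult_left_zero[OF tendsto_real_sqrt[OF this, unfolded real_sqrt_zero], of B]
  have "(\<lambda>n. ip (minimizing_seq n) (Y n) - f (Y n)) \<longlonglongrightarrow> 0"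
    by (rule Lim_null_comparison[rotated]) (simp add: bound always_eventually)
  from tendsto_add[OF this convergent_LIMSEQ_iff[THEN iffD1, OF f_P_Cauchy_convergent[OF Y]]]
  show ?thesis by simp
qed

lemma P_inner_minimizing_seq: "P_Cauchy S ip Y \<Longrightarrow> P_inner ip minimizing_seq Y = P_ext f Y"
  using minimizing_seq_represents by (simp add: P_inner_def P_ext_def limI)

lemma P_norm_minimizing_seq_le: "P_norm ip minimizing_seq \<le> M"
proof -
  define L where "L = lim (\<lambda>n. f (minimizing_seq n))"
  have ip_lim: "(\<lambda>n. ip (minimizing_seq n) (minimizing_seq n)) \<longlonglongrightarrow> L"
    using minimizing_seq_represents[OF minimizing_seq_Cauchy] by (simp add: L_def)
  have f_lim: "(\<lambda>n. f (minimizing_seq n)) \<longlonglongrightarrow> L"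
    using f_P_Cauchy_convergent[OF minimizing_seq_Cauchy] by (simp add: L_def convergent_LIMSEQ_iff)
  have "L \<ge> 0" using ip_lim by (rule LIMSEQ_le_const) (use ip_self_nonneg minimizing_seq in auto)
  have "L \<le> M * sqrt L"
  proof (rule LIMSEQ_le[OF f_lim])
    show "(\<lambda>n. M * seminorm (minimizing_seq n)) \<longlonglongrightarrow> M * sqrt L"
      unfolding seminorm_def by (intro tendsto_intros ip_lim)
    show "\<exists>N. \<forall>n\<ge>N. f (minimizing_seq n) \<le> M * seminorm (minimizing_seq n)"
      using f_bounded[OF minimizing_seq(1)] abs_ge_self order_trans by blast
  qed
  then have "sqrt L * sqrt L \<le> M * sqrt L" using \<open>L \<ge> 0\<close> by simp
  then have "sqrt L \<le> M"
  proof (cases "L = 0")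
    case False
    then have "sqrt L > 0" using \<open>L \<ge> 0\<close> by simp
    with \<open>sqrt L * sqrt L \<le> M * sqrt L\<close> show ?thesis using mult_le_cancel_right_pos by blast
  qed (use M_nonneg in simp)
  moreover have "P_norm ip minimizing_seq = sqrt L" using ip_lim by (simp add: P_norm_def P_inner_def limI)
  ultimately show ?thesis by simp
qed

lemma representer_unique:
  assumes X: "P_Cauchy S ip X" and Y: "P_Cauchy S ip Y"
    and X_rep: "\<forall>Z. P_Cauchy S ip Z \<longrightarrow> P_inner ip X Z = P_ext f Z"
    and Y_rep: "\<forall>Z. P_Cauchy S ip Z \<longrightarrow> P_inner ip Y Z = P_ext f Z"
  shows "P_equiv ip X Y"
proof -
  define D where "D n = X n - Y n" for n
  have D: "P_Cauchy S ip D" unfolding D_def by (rule P_Cauchy_diff[OF X Y])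
  have "ip (D n) (D n) = ip (X n) (D n) - ip (Y n) (D n)" for n
    using ip_diff_left[OF P_Cauchy_in[OF X] P_Cauchy_in[OF Y] P_Cauchy_in[OF D]] by (simp add: D_def)
  moreover have "P_inner ip X D = P_inner ip Y D" using X_rep Y_rep D by simp
  ultimately have "(\<lambda>n. ip (D n) (D n)) \<longlonglongrightarrow> 0"
    using tendsto_diff[OF P_Cauchy_ip_LIMSEQ[OF X D] P_Cauchy_ip_LIMSEQ[OF Y D]] by simp
  from tendsto_real_sqrt[OF this] show ?thesis by (simp add: P_equiv_def D_def)
qed

theorem riesz_representation:
  "\<exists>X. P_Cauchy S ip X \<and> (\<forall>Y. P_Cauchy S ip Y \<longrightarrow> P_inner ip X Y = P_ext f Y)
     \<and> (\<forall>Y. P_Cauchy S ip Y \<and> (\<forall>Z. P_Cauchy S ip Z \<longrightarrow> P_inner ip Y Z = P_ext f Z)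
          \<longrightarrow> P_equiv ip X Y)
     \<and> P_norm ip X \<le> M"
proof (intro exI conjI allI impI)
  show "P_Cauchy S ip minimizing_seq" by (rule minimizing_seq_Cauchy)
  show "P_inner ip minimizing_seq Y = P_ext f Y" if "P_Cauchy S ip Y" for Y
    using that by (rule P_inner_minimizing_seq)
  show "P_equiv ip minimizing_seq Y"
    if "P_Cauchy S ip Y \<and> (\<forall>Z. P_Cauchy S ip Z \<longrightarrow> P_inner ip Y Z = P_ext f Z)" for Y
    using that minimizing_seq_Cauchy P_inner_minimizing_seq by (intro representer_unique) auto
  show "P_norm ip minimizing_seq \<le> M" by (rule P_norm_minimizing_seq_le)
qed

end

section \<open>Square-integrable functions and Lebesgue measure on the domains\<close>

definition square_integrable :: "'a measure \<Rightarrow> ('a \<Rightarrow> real) set" where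
  "square_integrable M = {g. g \<in> borel_measurable M \<and> integrable M (\<lambda>y. (g y)\<^sup>2)}"

lemma integral_lincomb:
  fixes g h :: "'a \<Rightarrow> real"
  assumes "integrable M g" "integrable M h"
  shows "integral\<^sup>L M (\<lambda>y. a * g y + b * h y) = a * integral\<^sup>L M g + b * integral\<^sup>L M h"
  using assms by (simp add: Bochner_Integration.integral_add)

lemma square_integrable_mult:
  assumes "g \<in> square_integrable M" "h \<in> square_integrable M"
  shows "integrable M (\<lambda>y. g y * h y)"
proof (rule Bochner_Integration.integrable_bound)
  show "integrable M (\<lambda>y. (g y)\<^sup>2 + (h y)\<^sup>2)"
    using assms by (simp add: square_integrable_def)
  have "\<bar>g y\<bar> * \<bar>h y\<bar> \<le> (g y)\<^sup>2 + (h y)\<^sup>2" for y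
  proof -
    have "2 * (\<bar>g y\<bar> * \<bar>h y\<bar>) \<le> (g y)\<^sup>2 + (h y)\<^sup>2"
      using zero_le_power2[of "\<bar>g y\<bar> - \<bar>h y\<bar>"] by (simp add: power2_eq_square algebra_simps)
    moreover have "0 \<le> \<bar>g y\<bar> * \<bar>h y\<bar>" by simp
    ultimately show ?thesis by linarith
  qed
  then show "AE y in M. norm (g y * h y) \<le> norm ((g y)\<^sup>2 + (h y)\<^sup>2)"
    by (simp add: abs_mult)
qed (use assms in \<open>auto simp: square_integrable_def intro!: borel_measurable_times\<close>)

lemma semi_inner_space_square_integrable:
  "semi_inner_space (square_integrable M) (\<lambda>g h. integral\<^sup>L M (\<lambda>y. g y * h y))"
proof
  show "(\<lambda>_. 0) \<in> square_integrable M" by (simp add: square_integrable_def)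
next
  fix g h :: "'a \<Rightarrow> real" and a b :: real
  assume gh: "g \<in> square_integrable M" "h \<in> square_integrable M"
  have "(\<lambda>y. (lincomb a g b h y)\<^sup>2) = (\<lambda>y. a\<^sup>2 * (g y)\<^sup>2 + (2 * a * b * (g y * h y) + b\<^sup>2 * (h y)\<^sup>2))"
    by (simp add: lincomb_def fun_eq_iff power2_eq_square algebra_simps)
  then show "lincomb a g b h \<in> square_integrable M"
    using gh square_integrable_mult[OF gh]
    by (auto simp: square_integrable_def lincomb_def intro!: borel_measurable_add borel_measurable_times)
next
  fix g h w :: "'a \<Rightarrow> real" and a b :: real
  assume "g \<in> square_integrable M" "h \<in> square_integrable M" "w \<in> square_integrable M"
  then show "integral\<^sup>L M (\<lambda>y. lincomb a g b h y * w y)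
      = a * integral\<^sup>L M (\<lambda>y. g y * w y) + b * integral\<^sup>L M (\<lambda>y. h y * w y)"
    using integral_lincomb[OF square_integrable_mult square_integrable_mult]
    by (simp add: lincomb_def algebra_simps)
qed (simp_all add: mult.commute)

lemma abs_integral_mult_le:
  assumes "g \<in> square_integrable M" "h \<in> square_integrable M"
  shows "\<bar>integral\<^sup>L M (\<lambda>y. g y * h y)\<bar>
    \<le> sqrt (integral\<^sup>L M (\<lambda>y. (g y)\<^sup>2)) * sqrt (integral\<^sup>L M (\<lambda>y. (h y)\<^sup>2))"
  using semi_inner_space.cauchy_schwarz[OF semi_inner_space_square_integrable assms]
  by (simp add: semi_inner_space.seminorm_def[OF semi_inner_space_square_integrable] power2_eq_square)

lemma set_lebesgue_integral_eq_lebesgue_on: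
  "S \<in> sets lebesgue \<Longrightarrow> (LINT y:S|lebesgue. f y) = integral\<^sup>L (lebesgue_on S) (f :: _ \<Rightarrow> real)"
  by (simp add: set_lebesgue_integral_def integral_restrict_space)

lemma isL2_imp_square_integrable:
  "isL2 S f \<Longrightarrow> S \<in> sets lebesgue \<Longrightarrow> f \<in> square_integrable (lebesgue_on S)"
  by (simp add: isL2_def square_integrable_def set_integrable_def integrable_restrict_space)

lemma normL2_eq:
  "S \<in> sets lebesgue \<Longrightarrow> normL2 S f = sqrt (integral\<^sup>L (lebesgue_on S) (\<lambda>y. (f y)\<^sup>2))"
  by (simp add: normL2_def set_lebesgue_integral_eq_lebesgue_on)

lemma normL2_nonneg: "normL2 S f \<ge> 0"
  unfolding normL2_def set_lebesgue_integral_def by (simp add: integral_nonneg_AE)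

lemma integrable_lebesgue_on_bounded:
  fixes f :: "'a::euclidean_space \<Rightarrow> real"
  assumes "S \<in> lmeasurable" "f \<in> borel_measurable (lebesgue_on S)"
    and "AE y in lebesgue_on S. \<bar>f y\<bar> \<le> B"
  shows "integrable (lebesgue_on S) f"
  by (rule finite_measure.integrable_const_bound[OF finite_measure_lebesgue_on[OF assms(1)], of f B])
    (use assms(2,3) in simp_all)

lemma continuous_imp_measurable_lebesgue_on:
  "continuous_on UNIV g \<Longrightarrow> S \<in> sets lebesgue \<Longrightarrow> g \<in> borel_measurable (lebesgue_on S)"
  by (rule continuous_imp_measurable_on_sets_lebesgue) (auto intro: continuous_on_subset)

lemma AE_abs_le_normLinf:
  assumes "esssup (lebesgue_on S) (\<lambda>y. ereal \<bar>g y\<bar>) < \<infinity>"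
  shows "AE y in lebesgue_on S. \<bar>g y\<bar> \<le> normLinf S g"
  using esssup_AE[of "\<lambda>y. ereal \<bar>g y\<bar>" "lebesgue_on S"]
proof (rule eventually_mono)
  fix y assume "ereal \<bar>g y\<bar> \<le> esssup (lebesgue_on S) (\<lambda>y. ereal \<bar>g y\<bar>)"
  with assms show "\<bar>g y\<bar> \<le> normLinf S g"
    unfolding normLinf_def by (cases "esssup (lebesgue_on S) (\<lambda>y. ereal \<bar>g y\<bar>)") auto
qed

lemma Omega_lmeasurable: "Omega \<in> lmeasurable"
  unfolding Omega_def by (intro lmeasurable_open) auto

lemma QT_lmeasurable: "QT T \<in> lmeasurable"
  unfolding QT_def Omega_def by (intro lmeasurable_open bounded_Times open_Times) auto

lemma qT_lmeasurable: "open \<omega> \<Longrightarrow> \<omega> \<subseteq> Omega \<Longrightarrow> qT \<omega> T \<in> lmeasurable"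
  unfolding qT_def Omega_def
  by (intro lmeasurable_open bounded_Times open_Times) (auto intro: bounded_subset[OF bounded_Ioo])

lemma qT_subset_QT: "\<omega> \<subseteq> Omega \<Longrightarrow> qT \<omega> T \<subseteq> QT T"
  unfolding qT_def QT_def by blast

lemma continuous_bounded_on_closed_QT:
  fixes g :: "real \<times> real \<Rightarrow> real"
  assumes "continuous_on UNIV g"
  obtains B where "B \<ge> 0" "\<And>x t. x \<in> {0..1} \<Longrightarrow> t \<in> {0..T} \<Longrightarrow> \<bar>g (x, t)\<bar> \<le> B"
proof -
  have "compact (g ` cbox (0, 0) (1, T))"
    using assms by (meson compact_cbox compact_continuous_image continuous_on_subset subset_UNIV)
  then obtain B where "\<forall>z\<in>g ` cbox (0, 0) (1, T). norm z \<le> B"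
    using compact_imp_bounded bounded_iff by metis
  then have "\<bar>g (x, t)\<bar> \<le> max B 0" if "x \<in> {0..1}" "t \<in> {0..T}" for x t
    using that by (fastforce simp: cbox_Pair_eq le_max_iff_disj)
  then show ?thesis using that[of "max B 0"] by simp
qed

lemma continuous_bounded_on_QT:
  fixes g :: "real \<times> real \<Rightarrow> real"
  assumes "continuous_on UNIV g"
  obtains B where "B \<ge> 0" "\<And>y. y \<in> QT T \<Longrightarrow> \<bar>g y\<bar> \<le> B"
proof -
  obtain B where "B \<ge> 0" "\<And>x t. x \<in> {0..1} \<Longrightarrow> t \<in> {0..T} \<Longrightarrow> \<bar>g (x, t)\<bar> \<le> B"
    using continuous_bounded_on_closed_QT[OF assms] by blast
  then show ?thesis using that[of B] by (force simp: QT_def Omega_def)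
qed

lemma P0_continuous:
  assumes "p \<in> P0 T"
  shows "continuous_on UNIV p" "continuous_on UNIV (dt p)" "continuous_on UNIV (dx (dx p))"
  using assms by (auto simp: P0_def C2_def)

lemma deriv_lincomb:
  fixes f g :: "real \<Rightarrow> real"
  assumes "f differentiable (at x)" "g differentiable (at x)"
  shows "deriv (\<lambda>x'. a * f x' + b * g x') x = a * deriv f x + b * deriv g x"
  using assms
  by (intro DERIV_imp_deriv derivative_eq_intros) (auto simp: DERIV_deriv_iff_real_differentiable)

lemma partials_exist_lincomb:
  assumes "partials_exist p" "partials_exist q"
  shows "partials_exist (lincomb a p b q)"
    and "dx (lincomb a p b q) = lincomb a (dx p) b (dx q)"
    and "dt (lincomb a p b q) = lincomb a (dt p) b (dt q)"
  using assms unfolding partials_exist_def lincomb_def dx_def dt_def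
  by (auto simp: fun_eq_iff intro!: deriv_lincomb differentiable_add differentiable_mult)

lemma continuous_on_lincomb:
  "continuous_on UNIV f \<Longrightarrow> continuous_on UNIV g \<Longrightarrow> continuous_on UNIV (lincomb a f b g)"
  unfolding lincomb_def by (intro continuous_intros)

lemma C2_lincomb:
  assumes "C2 p" "C2 q"
  shows "C2 (lincomb a p b q)"
    and "dx (dx (lincomb a p b q)) = lincomb a (dx (dx p)) b (dx (dx q))"
    and "dt (lincomb a p b q) = lincomb a (dt p) b (dt q)"
proof -
  have pe: "partials_exist p" "partials_exist q" "partials_exist (dx p)" "partials_exist (dx q)"
     "partials_exist (dt p)" "partials_exist (dt q)"
    using assms by (auto simp: C2_def)
  note d = partials_exist_lincomb(2,3)[OF pe(1,2)] partials_exist_lincomb(2,3)[OF pe(3,4)]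
    partials_exist_lincomb(2,3)[OF pe(5,6)]
  show "C2 (lincomb a p b q)"
    using assms unfolding C2_def d by (auto intro: partials_exist_lincomb(1) continuous_on_lincomb)
  show "dx (dx (lincomb a p b q)) = lincomb a (dx (dx p)) b (dx (dx q))"
    "dt (lincomb a p b q) = lincomb a (dt p) b (dt q)" unfolding d by simp_all
qed

lemma P0_lincomb: "p \<in> P0 T \<Longrightarrow> q \<in> P0 T \<Longrightarrow> lincomb a p b q \<in> P0 T"
  unfolding P0_def using C2_lincomb(1) by (auto simp: lincomb_def)

lemma zero_in_P0: "(\<lambda>_. 0) \<in> P0 T"
proof -
  have "dx (\<lambda>_. 0) = (\<lambda>_. 0)" "dt (\<lambda>_. 0) = (\<lambda>_. 0)" by (auto simp: dx_def dt_def fun_eq_iff)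
  then show ?thesis by (simp add: P0_def C2_def partials_exist_def)
qed

lemma Lstar_lincomb: "C2 p \<Longrightarrow> C2 q \<Longrightarrow> Lstar A (lincomb a p b q) = lincomb a (Lstar A p) b (Lstar A q)"
  unfolding Lstar_def using C2_lincomb(2,3)[of p q a b] by (simp add: lincomb_def fun_eq_iff algebra_simps)

section \<open>Carleman weights\<close>

lemma cube_mult_exp_neg_le:
  fixes k u :: real
  assumes "k > 0" "u \<ge> 0"
  shows "u ^ 3 * exp (- 2 * k * u) \<le> (3 / (2 * k)) ^ 3"
proof -
  have "2 * k * u / 3 \<le> exp (2 * k * u / 3)"
    using exp_ge_add_one_self[of "2 * k * u / 3"] by linarith
  then have "(2 * k * u / 3) ^ 3 \<le> exp (2 * k * u / 3) ^ 3"
    using assms by (intro power_mono) auto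
  also have "\<dots> = exp (2 * k * u)" by (simp flip: exp_of_nat_mult)
  finally have "u ^ 3 \<le> (3 / (2 * k)) ^ 3 * exp (2 * k * u)"
    using assms by (simp add: field_simps power_divide power_mult_distrib)
  then show ?thesis by (simp add: exp_minus field_simps)
qed

locale carleman_weights =
  fixes T T1 lam s :: real and psi :: "real \<Rightarrow> real" and th :: "real \<Rightarrow> real \<Rightarrow> real"
  assumes T_pos: "T > 0" and T1_le: "T1 \<le> 3 * T / 8"
    and psi_continuous: "continuous_on {0..1} psi" and psi_le_1: "\<And>x. x \<in> Omega \<Longrightarrow> psi x \<le> 1"
    and th_C2: "C2_on (th s) {0..<T}"
    and th_initial: "\<And>t. t \<in> {0..T/4} \<Longrightarrow> th s t = 1 + (1 - 4 * t / T) powr (s * lam\<^sup>2 * exp (2 * lam))"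
    and th_middle: "\<And>t. t \<in> {T/4..T - 2 * T1} \<Longrightarrow> th s t = 1"
    and th_mono: "mono_on {T - 2 * T1..T - T1} (th s)"
    and th_final: "\<And>t. t \<in> {T - T1..<T} \<Longrightarrow> th s t = 1 / (T - t)"
    and lam_ge_1: "lam \<ge> 1" and s_ge_1: "s \<ge> 1"
begin

lemma th_pos: assumes "0 \<le> t" "t < T" shows "th s t > 0"
proof -
  consider "t \<le> T/4" | "T/4 \<le> t" "t \<le> T - 2 * T1" | "T - 2 * T1 \<le> t" "t \<le> T - T1" | "T - T1 \<le> t"
    by linarith
  then show ?thesis
  proof cases
    case 1
    then show ?thesis using th_initial[of t] assms by (simp add: add_pos_nonneg)
  next
    case 3
    have "th s (T - 2 * T1) = 1" using th_middle T1_le by simp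
    moreover have "th s (T - 2 * T1) \<le> th s t" by (rule mono_onD[OF th_mono]) (use 3 in auto)
    ultimately show ?thesis by simp
  qed (use th_middle th_final assms in auto)
qed

lemma th_0: "th s 0 = 2"
  using th_initial[of 0] T_pos by simp

lemma th_continuous: "continuous_on {0..<T} (th s)"
proof -
  obtain f1 where "\<And>t. t \<in> {0..<T} \<Longrightarrow> (th s has_real_derivative f1 t) (at t within {0..<T})"
    using th_C2 unfolding C2_on_def by blast
  then show ?thesis by (intro DERIV_continuous_on)
qed

text \<open>Since \<open>psihat \<le> 7\<close> on \<open>Omega\<close>, \<open>phi \<ge> th * kappa\<close> there.\<close>

definition kappa :: real where
  "kappa = lam * exp (12 * lam) - exp (7 * lam)"

lemma kappa_pos: "kappa > 0"
proof -
  have "exp (7 * lam) < exp (12 * lam)" using lam_ge_1 by simp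
  also have "\<dots> \<le> lam * exp (12 * lam)" using lam_ge_1 by simp
  finally show ?thesis by (simp add: kappa_def)
qed

lemma exp_psihat_le: "x \<in> Omega \<Longrightarrow> exp (lam * psihat psi x) \<le> exp (7 * lam)"
  using psi_le_1[of x] lam_ge_1 by (simp add: psihat_def)

lemma phi_ge: "x \<in> Omega \<Longrightarrow> th s t \<ge> 0 \<Longrightarrow> th s t * kappa \<le> phi th lam psi s (x, t)"
  unfolding phi_def kappa_def using exp_psihat_le by (simp add: mult_left_mono)

lemma phi_le: "th s t \<ge> 0 \<Longrightarrow> phi th lam psi s (x, t) \<le> th s t * (lam * exp (12 * lam))"
  unfolding phi_def by (simp add: mult_left_mono)

lemma QT_memD: "y \<in> QT T \<Longrightarrow> fst y \<in> Omega \<and> snd y \<in> {0<..<T}"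
  by (auto simp: QT_def)

lemma th_pos_QT: "y \<in> QT T \<Longrightarrow> th s (snd y) > 0"
  using QT_memD[of y] th_pos[of "snd y"] by simp

lemma phi_nonneg_QT: "y \<in> QT T \<Longrightarrow> phi th lam psi s y \<ge> 0"
  using phi_ge[of "fst y" "snd y"] QT_memD th_pos_QT kappa_pos
  by (metis less_imp_le mult_pos_pos order_trans prod.collapse)

lemma rho_ge_1_QT: "y \<in> QT T \<Longrightarrow> rho th lam psi s y \<ge> 1"
  unfolding rho_def using phi_nonneg_QT s_ge_1 by simp

lemma inverse_rho_sq_le_1: "y \<in> QT T \<Longrightarrow> 1 / (rho th lam psi s y)\<^sup>2 \<le> 1"
  using one_le_power[OF rho_ge_1_QT, of y 2] by (simp add: divide_le_eq_1)

lemma xi_pos_QT: "y \<in> QT T \<Longrightarrow> xi th lam psi s y > 0"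
  unfolding xi_def using th_pos_QT by simp

lemma rho0_pos_QT: "y \<in> QT T \<Longrightarrow> rho0 th lam psi s y > 0"
  unfolding rho0_def rho_def using xi_pos_QT[of y] by simp

text \<open>As \<open>t \<rightarrow> T\<close> the factor \<open>xi\<^sup>3\<close> in \<open>rho0\<^sup>-\<^sup>2\<close> blows up like \<open>th\<^sup>3\<close>, but \<open>exp (-2 s phi)\<close>
  decays like \<open>exp (-2 kappa th)\<close>.\<close>

lemma inverse_rho0_sq_bounded:
  obtains K where "\<And>y. y \<in> QT T \<Longrightarrow> 1 / (rho0 th lam psi s y)\<^sup>2 \<le> K"
proof
  fix y assume y: "y \<in> QT T"
  define u where "u = th s (snd y)"
  define x where "x = xi th lam psi s y"
  define p where "p = phi th lam psi s y"
  have u: "u > 0" using th_pos_QT[OF y] by (simp add: u_def)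
  have x: "0 < x" "x \<le> u * exp (7 * lam)"
    using xi_pos_QT[OF y] exp_psihat_le[of "fst y"] QT_memD[OF y] u
    by (auto simp: x_def xi_def u_def)
  have "kappa * u \<le> p"
    using phi_ge[of "fst y" "snd y"] QT_memD[OF y] u by (simp add: u_def p_def mult.commute)
  also have "\<dots> \<le> s * p"
    using mult_right_mono[OF s_ge_1 phi_nonneg_QT[OF y]] by (simp add: p_def)
  finally have exp_le: "exp (- 2 * s * p) \<le> exp (- 2 * kappa * u)" by simp
  have "(x powr (-3/2))\<^sup>2 = x powr (-3)"
    by (simp add: power2_eq_square flip: powr_add)
  also have "\<dots> = 1 / x ^ 3"
    using x by (simp add: powr_minus_divide powr_realpow)
  finally have "(rho0 th lam psi s y)\<^sup>2 = 1 / x ^ 3 * exp (2 * s * p)"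
    by (simp add: rho0_def rho_def x_def p_def power_mult_distrib flip: exp_of_nat_mult)
  then have "1 / (rho0 th lam psi s y)\<^sup>2 = x ^ 3 * exp (- 2 * s * p)"
    using x by (simp add: exp_minus divide_inverse)
  also have "\<dots> \<le> (u * exp (7 * lam)) ^ 3 * exp (- 2 * kappa * u)"
    using x exp_le by (intro mult_mono power_mono) auto
  also have "\<dots> = exp (21 * lam) * (u ^ 3 * exp (- 2 * kappa * u))"
    by (simp add: power_mult_distrib flip: exp_of_nat_mult)
  also have "\<dots> \<le> exp (21 * lam) * (3 / (2 * kappa)) ^ 3"
    using cube_mult_exp_neg_le[OF kappa_pos less_imp_le[OF u]] by simp
  finally show "1 / (rho0 th lam psi s y)\<^sup>2 \<le> exp (21 * lam) * (3 / (2 * kappa)) ^ 3" .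
qed

lemma weights_measurable:
  assumes "S \<subseteq> QT T" "S \<in> sets lebesgue"
  shows "(\<lambda>y. rho th lam psi s y) \<in> borel_measurable (lebesgue_on S)"
    and "(\<lambda>y. rho0 th lam psi s y) \<in> borel_measurable (lebesgue_on S)"
proof -
  have "continuous_on S (\<lambda>y. th s (snd y))"
    using assms(1)
    by (intro continuous_on_compose2[OF th_continuous continuous_on_snd]) (auto simp: QT_def)
  moreover have "continuous_on S (\<lambda>y. psi (fst y))"
    using assms(1)
    by (intro continuous_on_compose2[OF psi_continuous continuous_on_fst]) (auto simp: QT_def Omega_def)
  ultimately have [measurable]: "(\<lambda>y. th s (snd y)) \<in> borel_measurable (lebesgue_on S)"
    "(\<lambda>y. psi (fst y)) \<in> borel_measurable (lebesgue_on S)"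
    using continuous_imp_measurable_on_sets_lebesgue assms(2) by blast+
  show "(\<lambda>y. rho th lam psi s y) \<in> borel_measurable (lebesgue_on S)"
    unfolding rho_def phi_def psihat_def by measurable
  then show "(\<lambda>y. rho0 th lam psi s y) \<in> borel_measurable (lebesgue_on S)"
    unfolding rho0_def xi_def psihat_def by measurable
qed

lemma initial_weights_measurable:
  shows "(\<lambda>x. rho th lam psi s (x, 0)) \<in> borel_measurable (lebesgue_on Omega)"
    and "(\<lambda>x. phi th lam psi s (x, 0)) \<in> borel_measurable (lebesgue_on Omega)"
proof -
  have "continuous_on Omega psi"
    using psi_continuous by (rule continuous_on_subset) (auto simp: Omega_def)
  then have [measurable]: "psi \<in> borel_measurable (lebesgue_on Omega)"
    using continuous_imp_measurable_on_sets_lebesgue Omega_lmeasurable by blast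
  show "(\<lambda>x. phi th lam psi s (x, 0)) \<in> borel_measurable (lebesgue_on Omega)"
    unfolding phi_def psihat_def fst_conv snd_conv by measurable
  then show "(\<lambda>x. rho th lam psi s (x, 0)) \<in> borel_measurable (lebesgue_on Omega)"
    unfolding rho_def by measurable
qed

lemma phi_initial_bounds:
  "x \<in> Omega \<Longrightarrow> 0 \<le> phi th lam psi s (x, 0) \<and> phi th lam psi s (x, 0) \<le> 2 * (lam * exp (12 * lam))"
  using phi_ge[of x 0] phi_le[of 0 x] th_0 kappa_pos by auto

lemma rho_initial_ge_1: "x \<in> Omega \<Longrightarrow> rho th lam psi s (x, 0) \<ge> 1"
  unfolding rho_def using phi_initial_bounds s_ge_1 by simp

end

locale carleman_scalar_product = carleman_weights +
  fixes A :: "real \<times> real \<Rightarrow> real" and \<omega> :: "real set"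
  assumes omega_open: "open \<omega>" and omega_subset: "\<omega> \<subseteq> Omega"
    and A_Linf: "isLinf (QT T) A"
begin

lemma Lstar_measurable:
  assumes p: "p \<in> P0 T"
  shows "Lstar A p \<in> borel_measurable (lebesgue_on (QT T))"
proof -
  note [measurable] = A_Linf[unfolded isLinf_def, THEN conjunct1]
    continuous_imp_measurable_lebesgue_on[OF P0_continuous(1)[OF p] fmeasurableD[OF QT_lmeasurable]]
    continuous_imp_measurable_lebesgue_on[OF P0_continuous(2)[OF p] fmeasurableD[OF QT_lmeasurable]]
    continuous_imp_measurable_lebesgue_on[OF P0_continuous(3)[OF p] fmeasurableD[OF QT_lmeasurable]]
  show ?thesis unfolding Lstar_def by measurable
qed

lemma Lstar_bounded_AE:
  assumes p: "p \<in> P0 T"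
  obtains B where "AE y in lebesgue_on (QT T). \<bar>Lstar A p y\<bar> \<le> B"
proof -
  have "AE y in lebesgue_on (QT T). \<bar>A y\<bar> \<le> normLinf (QT T) A"
    using A_Linf unfolding isLinf_def by (blast intro: AE_abs_le_normLinf)
  moreover obtain B1 B2 B3 where "B1 \<ge> 0" "\<And>y. y \<in> QT T \<Longrightarrow> \<bar>p y\<bar> \<le> B1"
    "\<And>y. y \<in> QT T \<Longrightarrow> \<bar>dt p y\<bar> \<le> B2" "\<And>y. y \<in> QT T \<Longrightarrow> \<bar>dx (dx p) y\<bar> \<le> B3"
    using continuous_bounded_on_QT P0_continuous[OF p] by metis
  ultimately have "AE y in lebesgue_on (QT T).
      \<bar>Lstar A p y\<bar> \<le> B2 + B3 + \<bar>normLinf (QT T) A\<bar> * B1"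
    unfolding Lstar_def
  proof (elim AE_mp, intro AE_I2 impI)
    fix y assume "y \<in> space (lebesgue_on (QT T))" and Ay: "\<bar>A y\<bar> \<le> normLinf (QT T) A"
    then have y: "y \<in> QT T" by simp
    have "\<bar>A y\<bar> * \<bar>p y\<bar> \<le> \<bar>normLinf (QT T) A\<bar> * B1"
      using Ay \<open>B1 \<ge> 0\<close> \<open>\<And>y. y \<in> QT T \<Longrightarrow> \<bar>p y\<bar> \<le> B1\<close>[OF y] by (intro mult_mono) auto
    moreover have "\<bar>dt p y\<bar> \<le> B2" "\<bar>dx (dx p) y\<bar> \<le> B3"
      using y \<open>\<And>y. y \<in> QT T \<Longrightarrow> \<bar>dt p y\<bar> \<le> B2\<close> \<open>\<And>y. y \<in> QT T \<Longrightarrow> \<bar>dx (dx p) y\<bar> \<le> B3\<close>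
      by auto
    ultimately show "\<bar>- dt p y - dx (dx p) y + A y * p y\<bar> \<le> B2 + B3 + \<bar>normLinf (QT T) A\<bar> * B1"
      unfolding abs_mult[symmetric] by arith
  qed
  then show ?thesis using that by blast
qed

lemma integrable_weighted_Lstar:
  assumes p: "p \<in> P0 T" and q: "q \<in> P0 T"
  shows "integrable (lebesgue_on (QT T)) (\<lambda>y. 1 / (rho th lam psi s y)\<^sup>2 * Lstar A p y * Lstar A q y)"
proof -
  obtain Bp Bq where Bp: "AE y in lebesgue_on (QT T). \<bar>Lstar A p y\<bar> \<le> Bp"
    and Bq: "AE y in lebesgue_on (QT T). \<bar>Lstar A q y\<bar> \<le> Bq"
    using Lstar_bounded_AE p q by metis
  note [measurable] = weights_measurable(1)[OF order_refl fmeasurableD[OF QT_lmeasurable]]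
    Lstar_measurable[OF p] Lstar_measurable[OF q]
  show ?thesis
  proof (rule integrable_lebesgue_on_bounded[OF QT_lmeasurable])
    show "AE y in lebesgue_on (QT T). \<bar>1 / (rho th lam psi s y)\<^sup>2 * Lstar A p y * Lstar A q y\<bar> \<le> Bp * Bq"
      using Bp Bq
    proof (elim AE_mp, intro AE_I2 impI)
      fix y assume "y \<in> space (lebesgue_on (QT T))" "\<bar>Lstar A q y\<bar> \<le> Bq" "\<bar>Lstar A p y\<bar> \<le> Bp"
      then have "\<bar>Lstar A p y\<bar> * \<bar>Lstar A q y\<bar> \<le> Bp * Bq"
        by (intro mult_mono) auto
      from mult_mono[OF inverse_rho_sq_le_1 this]
      show "\<bar>1 / (rho th lam psi s y)\<^sup>2 * Lstar A p y * Lstar A q y\<bar> \<le> Bp * Bq"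
        using \<open>y \<in> space (lebesgue_on (QT T))\<close> by (simp add: abs_mult)
    qed
  qed measurable
qed

lemma integrable_weighted_observation:
  assumes p: "p \<in> P0 T" and q: "q \<in> P0 T"
  shows "integrable (lebesgue_on (qT \<omega> T)) (\<lambda>y. 1 / (rho0 th lam psi s y)\<^sup>2 * p y * q y)"
proof -
  have qT: "qT \<omega> T \<in> lmeasurable" "qT \<omega> T \<subseteq> QT T"
    using qT_lmeasurable qT_subset_QT omega_open omega_subset by blast+
  obtain K where K: "\<And>y. y \<in> QT T \<Longrightarrow> 1 / (rho0 th lam psi s y)\<^sup>2 \<le> K"
    using inverse_rho0_sq_bounded by blast
  obtain Bp Bq where "Bp \<ge> 0" "\<And>y. y \<in> QT T \<Longrightarrow> \<bar>p y\<bar> \<le> Bp"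
    "Bq \<ge> 0" "\<And>y. y \<in> QT T \<Longrightarrow> \<bar>q y\<bar> \<le> Bq"
    using continuous_bounded_on_QT P0_continuous(1) p q by metis
  then have bound: "\<bar>1 / (rho0 th lam psi s y)\<^sup>2 * p y * q y\<bar> \<le> K * (Bp * Bq)" if "y \<in> QT T" for y
  proof -
    have "0 \<le> K" using K[OF that] order_trans[of 0 "1 / (rho0 th lam psi s y)\<^sup>2" K] by simp
    moreover have "\<bar>p y\<bar> * \<bar>q y\<bar> \<le> Bp * Bq"
      using \<open>Bp \<ge> 0\<close> \<open>\<And>y. y \<in> QT T \<Longrightarrow> \<bar>p y\<bar> \<le> Bp\<close>[OF that]
        \<open>\<And>y. y \<in> QT T \<Longrightarrow> \<bar>q y\<bar> \<le> Bq\<close>[OF that] by (intro mult_mono) auto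
    ultimately have "1 / (rho0 th lam psi s y)\<^sup>2 * (\<bar>p y\<bar> * \<bar>q y\<bar>) \<le> K * (Bp * Bq)"
      using mult_mono[OF K[OF that]] by simp
    then show ?thesis by (simp add: abs_mult)
  qed
  note [measurable] = weights_measurable(2)[OF qT(2) fmeasurableD[OF qT(1)]]
    continuous_imp_measurable_lebesgue_on[OF P0_continuous(1)[OF p] fmeasurableD[OF qT(1)]]
    continuous_imp_measurable_lebesgue_on[OF P0_continuous(1)[OF q] fmeasurableD[OF qT(1)]]
  show ?thesis
  proof (rule integrable_lebesgue_on_bounded[OF qT(1), where B = "K * (Bp * Bq)"])
    show "AE y in lebesgue_on (qT \<omega> T). \<bar>1 / (rho0 th lam psi s y)\<^sup>2 * p y * q y\<bar> \<le> K * (Bp * Bq)"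
      using qT(2) bound by (intro AE_I2) auto
  qed measurable
qed

lemma ipP0_eq: "ipP0 T \<omega> th lam psi A s p q =
   integral\<^sup>L (lebesgue_on (QT T)) (\<lambda>y. 1 / (rho th lam psi s y)\<^sup>2 * Lstar A p y * Lstar A q y)
   + s ^ 3 * lam ^ 4 * integral\<^sup>L (lebesgue_on (qT \<omega> T)) (\<lambda>y. 1 / (rho0 th lam psi s y)\<^sup>2 * p y * q y)"
  using fmeasurableD[OF QT_lmeasurable] fmeasurableD[OF qT_lmeasurable[OF omega_open omega_subset]]
  unfolding ipP0_def by (simp add: set_lebesgue_integral_eq_lebesgue_on)

lemma ipP0_lincomb_left:
  assumes u: "u \<in> P0 T" and v: "v \<in> P0 T" and w: "w \<in> P0 T"
  shows "ipP0 T \<omega> th lam psi A s (lincomb a u b v) w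
    = a * ipP0 T \<omega> th lam psi A s u w + b * ipP0 T \<omega> th lam psi A s v w"
proof -
  define L where "L p y = 1 / (rho th lam psi s y)\<^sup>2 * Lstar A p y * Lstar A w y" for p y
  define Obs where "Obs p y = 1 / (rho0 th lam psi s y)\<^sup>2 * p y * w y" for p y
  have ip: "ipP0 T \<omega> th lam psi A s p w
      = integral\<^sup>L (lebesgue_on (QT T)) (L p) + s ^ 3 * lam ^ 4 * integral\<^sup>L (lebesgue_on (qT \<omega> T)) (Obs p)"
    for p unfolding ipP0_eq L_def Obs_def ..
  have "C2 u" "C2 v" using u v by (auto simp: P0_def)
  have "L (lincomb a u b v) = (\<lambda>y. a * L u y + b * L v y)"
    "Obs (lincomb a u b v) = (\<lambda>y. a * Obs u y + b * Obs v y)"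
    unfolding L_def Obs_def Lstar_lincomb[OF \<open>C2 u\<close> \<open>C2 v\<close>]
    by (simp_all add: lincomb_def fun_eq_iff algebra_simps add_divide_distrib)
  moreover have "integrable (lebesgue_on (QT T)) (L p)" "integrable (lebesgue_on (qT \<omega> T)) (Obs p)"
    if "p \<in> P0 T" for p
    using integrable_weighted_Lstar[OF that w] integrable_weighted_observation[OF that w]
    by (simp_all add: L_def[abs_def] Obs_def[abs_def])
  ultimately show ?thesis
    unfolding ip using u v by (simp add: integral_lincomb algebra_simps)
qed

sublocale P0_space: semi_inner_space "P0 T" "ipP0 T \<omega> th lam psi A s"
proof
  fix u v assume "u \<in> P0 T" "v \<in> P0 T"
  show "ipP0 T \<omega> th lam psi A s u v = ipP0 T \<omega> th lam psi A s v u"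
    unfolding ipP0_def by (simp only: mult_ac)
next
  fix u assume "u \<in> P0 T"
  have "0 \<le> integral\<^sup>L (lebesgue_on (QT T)) (\<lambda>y. 1 / (rho th lam psi s y)\<^sup>2 * Lstar A u y * Lstar A u y)"
    "0 \<le> integral\<^sup>L (lebesgue_on (qT \<omega> T)) (\<lambda>y. 1 / (rho0 th lam psi s y)\<^sup>2 * u y * u y)"
    by (intro integral_nonneg_AE AE_I2; simp add: mult.assoc)+
  then show "0 \<le> ipP0 T \<omega> th lam psi A s u u"
    unfolding ipP0_eq using s_ge_1 by simp
qed (simp_all add: zero_in_P0 P0_lincomb ipP0_lincomb_left)

end

section \<open>The right-hand side functional and the main result\<close>

locale carleman_source = carleman_scalar_product +
  fixes C0 :: real and z0 :: "real \<Rightarrow> real" and B :: "real \<times> real \<Rightarrow> real"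
  assumes carleman: "\<And>p. p \<in> P0 T \<Longrightarrow> carleman_lhs T th lam psi s p \<le> C0 * ipP0 T \<omega> th lam psi A s p p"
    and B_L2: "isL2 (QT T) (\<lambda>y. rho0 th lam psi s y * B y)"
    and z0_L2: "isL2 Omega z0"
begin

definition interior_weighted :: "(real \<times> real \<Rightarrow> real) \<Rightarrow> real" where
  "interior_weighted u = integral\<^sup>L (lebesgue_on (QT T)) (\<lambda>y. 1 / (rho0 th lam psi s y)\<^sup>2 * (u y)\<^sup>2)"

definition initial_weighted :: "(real \<times> real \<Rightarrow> real) \<Rightarrow> real" where
  "initial_weighted u = integral\<^sup>L (lebesgue_on Omega) (\<lambda>x. 1 / (rho th lam psi s (x, 0))\<^sup>2 * (u (x, 0))\<^sup>2)"

definition initial_sq :: "(real \<times> real \<Rightarrow> real) \<Rightarrow> real" where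
  "initial_sq u = integral\<^sup>L (lebesgue_on Omega) (\<lambda>x. (u (x, 0))\<^sup>2)"

abbreviation c_phi :: real where
  "c_phi \<equiv> normLinf Omega (\<lambda>x. phi th lam psi s (x, 0))"

lemma carleman_terms_le:
  assumes u: "u \<in> P0 T"
  shows "s ^ 3 * lam ^ 4 * interior_weighted u \<le> max C0 1 * ipP0 T \<omega> th lam psi A s u u"
    and "s ^ 3 * lam ^ 4 * exp (14 * lam) * initial_weighted u \<le> max C0 1 * ipP0 T \<omega> th lam psi A s u u"
proof -
  define a where "a = integral\<^sup>L (lebesgue_on Omega) (\<lambda>x. 1 / (rho th lam psi s (x, 0))\<^sup>2 * (dx u (x, 0))\<^sup>2)"
  define b where "b = integral\<^sup>L (lebesgue_on (QT T)) (\<lambda>y. 1 / (rho1 th lam psi s y)\<^sup>2 * (dx u y)\<^sup>2)"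
  have lhs: "carleman_lhs T th lam psi s u = a + s ^ 3 * lam ^ 4 * exp (14 * lam) * initial_weighted u
      + s * lam ^ 2 * b + s ^ 3 * lam ^ 4 * interior_weighted u"
    unfolding carleman_lhs_def initial_weighted_def interior_weighted_def a_def b_def
    by (simp only: set_lebesgue_integral_eq_lebesgue_on[OF fmeasurableD[OF Omega_lmeasurable]]
      set_lebesgue_integral_eq_lebesgue_on[OF fmeasurableD[OF QT_lmeasurable]])
  have "C0 * ipP0 T \<omega> th lam psi A s u u \<le> max C0 1 * ipP0 T \<omega> th lam psi A s u u"
    using P0_space.ip_self_nonneg[OF u] by (intro mult_right_mono) auto
  with carleman[OF u] have le: "carleman_lhs T th lam psi s u \<le> max C0 1 * ipP0 T \<omega> th lam psi A s u u"
    by linarith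
  have "0 \<le> a" "0 \<le> b" "0 \<le> initial_weighted u" "0 \<le> interior_weighted u"
    unfolding a_def b_def initial_weighted_def interior_weighted_def by (simp_all add: integral_nonneg_AE)
  then have "0 \<le> a" "0 \<le> s ^ 3 * lam ^ 4 * exp (14 * lam) * initial_weighted u" "0 \<le> s * lam ^ 2 * b"
    "0 \<le> s ^ 3 * lam ^ 4 * interior_weighted u"
    using s_ge_1 lam_ge_1 by simp_all
  then show "s ^ 3 * lam ^ 4 * interior_weighted u \<le> max C0 1 * ipP0 T \<omega> th lam psi A s u u"
    and "s ^ 3 * lam ^ 4 * exp (14 * lam) * initial_weighted u \<le> max C0 1 * ipP0 T \<omega> th lam psi A s u u"
    using lhs le by linarith+
qed

lemma trace_square_integrable:
  assumes u: "u \<in> P0 T"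
  shows "(\<lambda>x. u (x, 0)) \<in> square_integrable (lebesgue_on Omega)"
proof -
  obtain Bu where "Bu \<ge> 0" and Bu: "\<And>x t. x \<in> {0..1} \<Longrightarrow> t \<in> {0..T} \<Longrightarrow> \<bar>u (x, t)\<bar> \<le> Bu"
    using continuous_bounded_on_closed_QT P0_continuous(1)[OF u] by metis
  have "continuous_on UNIV (\<lambda>x. u (x, 0::real))"
    by (rule continuous_on_compose2[OF P0_continuous(1)[OF u] _ subset_UNIV]) (intro continuous_intros)
  then have [measurable]: "(\<lambda>x. u (x, 0)) \<in> borel_measurable (lebesgue_on Omega)"
    using continuous_imp_measurable_lebesgue_on fmeasurableD[OF Omega_lmeasurable] by blast
  have bound: "\<bar>(u (x, 0))\<^sup>2\<bar> \<le> Bu\<^sup>2" if "x \<in> Omega" for x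
    using Bu[of x 0] that T_pos \<open>Bu \<ge> 0\<close> abs_le_square_iff[of "u (x, 0)" Bu] by (simp add: Omega_def)
  have "integrable (lebesgue_on Omega) (\<lambda>x. (u (x, 0))\<^sup>2)"
  proof (rule integrable_lebesgue_on_bounded[OF Omega_lmeasurable, where B = "Bu\<^sup>2"])
    show "AE x in lebesgue_on Omega. \<bar>(u (x, 0))\<^sup>2\<bar> \<le> Bu\<^sup>2" using bound by (intro AE_I2) simp
  qed measurable
  then show ?thesis by (simp add: square_integrable_def)
qed

lemma weighted_square_integrable:
  assumes u: "u \<in> P0 T"
  shows "(\<lambda>y. u y / rho0 th lam psi s y) \<in> square_integrable (lebesgue_on (QT T))"
proof -
  obtain K where K: "\<And>y. y \<in> QT T \<Longrightarrow> 1 / (rho0 th lam psi s y)\<^sup>2 \<le> K"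
    using inverse_rho0_sq_bounded by blast
  obtain Bu where "Bu \<ge> 0" and Bu: "\<And>y. y \<in> QT T \<Longrightarrow> \<bar>u y\<bar> \<le> Bu"
    using continuous_bounded_on_QT P0_continuous(1)[OF u] by metis
  note [measurable] = weights_measurable(2)[OF order_refl fmeasurableD[OF QT_lmeasurable]]
    continuous_imp_measurable_lebesgue_on[OF P0_continuous(1)[OF u] fmeasurableD[OF QT_lmeasurable]]
  have bound: "\<bar>(u y / rho0 th lam psi s y)\<^sup>2\<bar> \<le> K * Bu\<^sup>2" if "y \<in> QT T" for y
  proof -
    have "(u y)\<^sup>2 \<le> Bu\<^sup>2" using Bu[OF that] \<open>Bu \<ge> 0\<close> abs_le_square_iff[of "u y" Bu] by simp
    moreover have "0 \<le> K" using K[OF that] order_trans[of 0 "1 / (rho0 th lam psi s y)\<^sup>2" K] by simp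
    ultimately show ?thesis using mult_mono[OF K[OF that]] by (simp add: power_divide)
  qed
  have "integrable (lebesgue_on (QT T)) (\<lambda>y. (u y / rho0 th lam psi s y)\<^sup>2)"
  proof (rule integrable_lebesgue_on_bounded[OF QT_lmeasurable, where B = "K * Bu\<^sup>2"])
    show "AE y in lebesgue_on (QT T). \<bar>(u y / rho0 th lam psi s y)\<^sup>2\<bar> \<le> K * Bu\<^sup>2"
      using bound by (intro AE_I2) simp
  qed measurable
  then show ?thesis by (simp add: square_integrable_def)
qed

lemma source_term_le:
  assumes u: "u \<in> P0 T"
  shows "integrable (lebesgue_on (QT T)) (\<lambda>y. B y * u y)"
    and "\<bar>integral\<^sup>L (lebesgue_on (QT T)) (\<lambda>y. B y * u y)\<bar>
      \<le> normL2 (QT T) (\<lambda>y. rho0 th lam psi s y * B y) * sqrt (interior_weighted u)"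
proof -
  have B: "(\<lambda>y. rho0 th lam psi s y * B y) \<in> square_integrable (lebesgue_on (QT T))"
    by (rule isL2_imp_square_integrable[OF B_L2 fmeasurableD[OF QT_lmeasurable]])
  define wB where "wB y = rho0 th lam psi s y * B y" for y
  define wu where "wu y = u y / rho0 th lam psi s y" for y
  have eq: "B y * u y = wB y * wu y" if "y \<in> space (lebesgue_on (QT T))" for y
    using rho0_pos_QT[of y] that by (simp add: wB_def wu_def)
  have "integrable (lebesgue_on (QT T)) (\<lambda>y. B y * u y) = integrable (lebesgue_on (QT T)) (\<lambda>y. wB y * wu y)"
    by (rule Bochner_Integration.integrable_cong[OF refl]) (rule eq)
  then show "integrable (lebesgue_on (QT T)) (\<lambda>y. B y * u y)"
    using square_integrable_mult[OF B weighted_square_integrable[OF u]] by (simp only: wB_def wu_def)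
  have "integral\<^sup>L (lebesgue_on (QT T)) (\<lambda>y. B y * u y) = integral\<^sup>L (lebesgue_on (QT T)) (\<lambda>y. wB y * wu y)"
    by (rule Bochner_Integration.integral_cong[OF refl]) (rule eq)
  also have "\<bar>\<dots>\<bar> \<le> sqrt (integral\<^sup>L (lebesgue_on (QT T)) (\<lambda>y. (rho0 th lam psi s y * B y)\<^sup>2))
      * sqrt (integral\<^sup>L (lebesgue_on (QT T)) (\<lambda>y. (u y / rho0 th lam psi s y)\<^sup>2))"
    using abs_integral_mult_le[OF B weighted_square_integrable[OF u]] by (simp only: wB_def wu_def)
  also have "\<dots> = normL2 (QT T) (\<lambda>y. rho0 th lam psi s y * B y) * sqrt (interior_weighted u)"
    by (simp add: interior_weighted_def power_divide normL2_eq[OF fmeasurableD[OF QT_lmeasurable]])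
  finally show "\<bar>integral\<^sup>L (lebesgue_on (QT T)) (\<lambda>y. B y * u y)\<bar>
      \<le> normL2 (QT T) (\<lambda>y. rho0 th lam psi s y * B y) * sqrt (interior_weighted u)" .
qed

lemma initial_term_le:
  assumes u: "u \<in> P0 T"
  shows "integrable (lebesgue_on Omega) (\<lambda>x. z0 x * u (x, 0))"
    and "\<bar>integral\<^sup>L (lebesgue_on Omega) (\<lambda>x. z0 x * u (x, 0))\<bar> \<le> normL2 Omega z0 * sqrt (initial_sq u)"
proof -
  have z0: "z0 \<in> square_integrable (lebesgue_on Omega)"
    by (rule isL2_imp_square_integrable[OF z0_L2 fmeasurableD[OF Omega_lmeasurable]])
  show "integrable (lebesgue_on Omega) (\<lambda>x. z0 x * u (x, 0))"
    by (rule square_integrable_mult[OF z0 trace_square_integrable[OF u]])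
  show "\<bar>integral\<^sup>L (lebesgue_on Omega) (\<lambda>x. z0 x * u (x, 0))\<bar> \<le> normL2 Omega z0 * sqrt (initial_sq u)"
    using abs_integral_mult_le[OF z0 trace_square_integrable[OF u]]
    by (simp add: initial_sq_def normL2_eq[OF fmeasurableD[OF Omega_lmeasurable]])
qed

lemma phi_initial_le_c_phi: "AE x in lebesgue_on Omega. phi th lam psi s (x, 0) \<le> c_phi"
proof -
  have "esssup (lebesgue_on Omega) (\<lambda>x. ereal \<bar>phi th lam psi s (x, 0)\<bar>) \<le> ereal (2 * (lam * exp (12 * lam)))"
    using initial_weights_measurable(2) phi_initial_bounds by (intro esssup_I AE_I2) auto
  then have "AE x in lebesgue_on Omega. \<bar>phi th lam psi s (x, 0)\<bar> \<le> c_phi"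
    using order.strict_trans1[of _ _ \<infinity>] by (intro AE_abs_le_normLinf) auto
  then show ?thesis by (rule AE_mp) (intro AE_I2 impI; simp)
qed

text \<open>This is where the factor \<open>exp (c s)\<close> of the estimate comes from.\<close>

lemma initial_sq_le: "u \<in> P0 T \<Longrightarrow> initial_sq u \<le> exp (2 * c_phi * s) * initial_weighted u"
proof -
  assume u: "u \<in> P0 T"
  note [measurable] = initial_weights_measurable(1)
    trace_square_integrable[OF u, unfolded square_integrable_def, THEN CollectD, THEN conjunct1]
  have int: "integrable (lebesgue_on Omega) (\<lambda>x. 1 / (rho th lam psi s (x, 0))\<^sup>2 * (u (x, 0))\<^sup>2)"
  proof (rule Bochner_Integration.integrable_bound)
    show "integrable (lebesgue_on Omega) (\<lambda>x. (u (x, 0))\<^sup>2)"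
      using trace_square_integrable[OF u] by (simp add: square_integrable_def)
    have "(u (x, 0))\<^sup>2 / (rho th lam psi s (x, 0))\<^sup>2 \<le> (u (x, 0))\<^sup>2 / 1" if "x \<in> Omega" for x
      using one_le_power[OF rho_initial_ge_1[OF that], of 2] by (intro divide_left_mono) auto
    then show "AE x in lebesgue_on Omega.
        norm (1 / (rho th lam psi s (x, 0))\<^sup>2 * (u (x, 0))\<^sup>2) \<le> norm ((u (x, 0))\<^sup>2)"
      by (intro AE_I2) auto
  qed measurable
  have pointwise: "(u (x, 0))\<^sup>2 \<le> exp (2 * c_phi * s) * (1 / (rho th lam psi s (x, 0))\<^sup>2 * (u (x, 0))\<^sup>2)"
    if "phi th lam psi s (x, 0) \<le> c_phi" for x
  proof -
    have "(rho th lam psi s (x, 0))\<^sup>2 \<le> exp (2 * c_phi * s)"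
      using that s_ge_1 by (simp add: rho_def power2_eq_square flip: exp_add)
    then have "(u (x, 0))\<^sup>2 * (rho th lam psi s (x, 0))\<^sup>2 \<le> (u (x, 0))\<^sup>2 * exp (2 * c_phi * s)"
      by (intro mult_left_mono) simp_all
    then show ?thesis by (simp add: rho_def field_simps)
  qed
  have "initial_sq u \<le> integral\<^sup>L (lebesgue_on Omega)
      (\<lambda>x. exp (2 * c_phi * s) * (1 / (rho th lam psi s (x, 0))\<^sup>2 * (u (x, 0))\<^sup>2))"
    unfolding initial_sq_def
  proof (rule integral_mono_AE')
    show "integrable (lebesgue_on Omega)
        (\<lambda>x. exp (2 * c_phi * s) * (1 / (rho th lam psi s (x, 0))\<^sup>2 * (u (x, 0))\<^sup>2))"
      using int by (rule integrable_mult_right)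
    show "AE x in lebesgue_on Omega.
        (u (x, 0))\<^sup>2 \<le> exp (2 * c_phi * s) * (1 / (rho th lam psi s (x, 0))\<^sup>2 * (u (x, 0))\<^sup>2)"
      using phi_initial_le_c_phi by eventually_elim (rule pointwise)
  qed (intro AE_I2; simp)
  then show ?thesis unfolding initial_weighted_def by (simp only: integral_mult_right_zero)
qed

lemma rhs_functional_eq:
  "rhs_functional T z0 B u = integral\<^sup>L (lebesgue_on Omega) (\<lambda>x. z0 x * u (x, 0))
    + integral\<^sup>L (lebesgue_on (QT T)) (\<lambda>y. B y * u y)"
  unfolding rhs_functional_def
  by (simp add: set_lebesgue_integral_eq_lebesgue_on fmeasurableD[OF Omega_lmeasurable]
      fmeasurableD[OF QT_lmeasurable])

lemma rhs_functional_lincomb: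
  assumes u: "u \<in> P0 T" and v: "v \<in> P0 T"
  shows "rhs_functional T z0 B (lincomb a u b v) = a * rhs_functional T z0 B u + b * rhs_functional T z0 B v"
  using integral_lincomb[OF initial_term_le(1)[OF u] initial_term_le(1)[OF v], of a b]
    integral_lincomb[OF source_term_le(1)[OF u] source_term_le(1)[OF v], of a b]
  unfolding rhs_functional_eq by (simp add: lincomb_def algebra_simps)

lemma weighted_terms_sqrt_le:
  assumes u: "u \<in> P0 T"
  defines "Q \<equiv> sqrt (max C0 1) / lam\<^sup>2 * s powr (-3/2) * P0_space.seminorm u"
  shows "sqrt (interior_weighted u) \<le> Q" and "sqrt (initial_sq u) \<le> exp (c_phi * s) * Q"
proof -
  define N where "N = P0_space.seminorm u"
  define D where "D = s ^ 3 * lam ^ 4"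
  have "N \<ge> 0" "D > 0" using P0_space.seminorm_nonneg[OF u] s_ge_1 lam_ge_1 by (simp_all add: N_def D_def)
  then have "Q \<ge> 0" by (simp add: Q_def N_def[symmetric])
  have "(s powr (-3/2))\<^sup>2 = 1 / s ^ 3"
    using s_ge_1 by (simp add: power2_eq_square powr_minus_divide powr_realpow flip: powr_add)
  then have Q_sq: "Q\<^sup>2 = max C0 1 * N\<^sup>2 / D"
    by (simp add: Q_def N_def D_def power_mult_distrib power_divide flip: power_mult)
  have ip: "ipP0 T \<omega> th lam psi A s u u = N\<^sup>2" using P0_space.seminorm_sq[OF u] by (simp add: N_def)
  have "interior_weighted u \<le> Q\<^sup>2"
    using carleman_terms_le(1)[OF u] \<open>D > 0\<close> by (simp add: Q_sq ip D_def field_simps)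
  then show "sqrt (interior_weighted u) \<le> Q" using \<open>Q \<ge> 0\<close> by (rule real_le_lsqrt[rotated])
  have "0 \<le> initial_weighted u" unfolding initial_weighted_def by (simp add: integral_nonneg_AE)
  then have "initial_weighted u \<le> exp (14 * lam) * initial_weighted u"
    using mult_right_mono[of 1 "exp (14 * lam)" "initial_weighted u"] lam_ge_1 by simp
  then have "D * initial_weighted u \<le> D * exp (14 * lam) * initial_weighted u"
    using \<open>D > 0\<close> by (simp add: mult.assoc)
  then have "initial_weighted u \<le> Q\<^sup>2"
    using carleman_terms_le(2)[OF u] \<open>D > 0\<close> by (simp add: Q_sq ip D_def field_simps)
  then have "initial_sq u \<le> exp (2 * c_phi * s) * Q\<^sup>2"
    using initial_sq_le[OF u] mult_left_mono[of _ _ "exp (2 * c_phi * s)"] by (meson exp_ge_zero order_trans)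
  also have "\<dots> = (exp (c_phi * s) * Q)\<^sup>2" by (simp add: power_mult_distrib mult.assoc flip: exp_of_nat_mult)
  finally show "sqrt (initial_sq u) \<le> exp (c_phi * s) * Q"
    using \<open>Q \<ge> 0\<close> by (intro real_le_lsqrt) simp_all
qed

definition rhs_bound :: real where
  "rhs_bound = sqrt (max C0 1) / lam\<^sup>2 * s powr (-3/2)
    * (normL2 (QT T) (\<lambda>y. rho0 th lam psi s y * B y) + exp (c_phi * s) * normL2 Omega z0)"

lemma rhs_bound_nonneg: "rhs_bound \<ge> 0"
  unfolding rhs_bound_def by (simp add: normL2_nonneg)

lemma rhs_functional_bounded:
  assumes u: "u \<in> P0 T"
  shows "\<bar>rhs_functional T z0 B u\<bar> \<le> rhs_bound * P0_space.seminorm u"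
proof -
  define Q where "Q = sqrt (max C0 1) / lam\<^sup>2 * s powr (-3/2) * P0_space.seminorm u"
  have "\<bar>rhs_functional T z0 B u\<bar>
      \<le> normL2 Omega z0 * sqrt (initial_sq u)
        + normL2 (QT T) (\<lambda>y. rho0 th lam psi s y * B y) * sqrt (interior_weighted u)"
    unfolding rhs_functional_eq using initial_term_le(2)[OF u] source_term_le(2)[OF u] by linarith
  also have "\<dots> \<le> normL2 Omega z0 * (exp (c_phi * s) * Q) + normL2 (QT T) (\<lambda>y. rho0 th lam psi s y * B y) * Q"
    using weighted_terms_sqrt_le[OF u] unfolding Q_def[symmetric]
    by (intro add_mono mult_left_mono) (simp_all add: normL2_nonneg)
  also have "\<dots> = rhs_bound * P0_space.seminorm u" by (simp add: rhs_bound_def Q_def algebra_simps)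
  finally show ?thesis .
qed

theorem weak_solution_exists_unique:
  "\<exists>X. P_Cauchy (P0 T) (ipP0 T \<omega> th lam psi A s) X
     \<and> (\<forall>Y. P_Cauchy (P0 T) (ipP0 T \<omega> th lam psi A s) Y \<longrightarrow>
          P_inner (ipP0 T \<omega> th lam psi A s) X Y = P_ext (rhs_functional T z0 B) Y)
     \<and> (\<forall>Y. P_Cauchy (P0 T) (ipP0 T \<omega> th lam psi A s) Y
          \<and> (\<forall>Z. P_Cauchy (P0 T) (ipP0 T \<omega> th lam psi A s) Z \<longrightarrow>
               P_inner (ipP0 T \<omega> th lam psi A s) Y Z = P_ext (rhs_functional T z0 B) Z)
          \<longrightarrow> P_equiv (ipP0 T \<omega> th lam psi A s) X Y)
     \<and> P_norm (ipP0 T \<omega> th lam psi A s) X \<le> sqrt (max C0 1) / lam\<^sup>2 * s powr (-3/2)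
         * (normL2 (QT T) (\<lambda>y. rho0 th lam psi s y * B y) + exp (c_phi * s) * normL2 Omega z0)"
proof -
  interpret bounded_functional "P0 T" "ipP0 T \<omega> th lam psi A s" "rhs_functional T z0 B" rhs_bound
    by unfold_locales (use rhs_functional_lincomb rhs_functional_bounded rhs_bound_nonneg in auto)
  from riesz_representation show ?thesis unfolding rhs_bound_def .
qed

end

theorem lemma2:
  fixes \<omega> :: "real set" and T T1 lam0 s0 C0 :: real
    and psi :: "real \<Rightarrow> real" and th :: "real \<Rightarrow> real \<Rightarrow> real"
  assumes omega: "open \<omega>" "\<omega> \<noteq> {}" "closure \<omega> \<subseteq> Omega"
    and T: "T > 0" "0 < T1" "T1 < min (1/4) (3 * T / 8)"
    and psi: "psi C1_differentiable_on {0..1}" "\<forall>x\<in>Omega. 0 < psi x \<and> psi x < 1"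
      "psi 0 = 0" "psi 1 = 0" "\<forall>x\<in>closure (Omega - \<omega>). \<bar>deriv psi x\<bar> > 0"
    and theta: "\<forall>s\<ge>1. C2_on (th s) {0..<T}
       \<and> (\<forall>t\<in>{0..T/4}. th s t = 1 + (1 - 4 * t / T) powr (s * lam0\<^sup>2 * exp (2 * lam0)))
       \<and> (\<forall>t\<in>{T/4..T - 2 * T1}. th s t = 1)
       \<and> mono_on {T - 2 * T1..T - T1} (th s)
       \<and> (\<forall>t\<in>{T - T1..<T}. th s t = 1 / (T - t))"
    and params: "lam0 \<ge> 1" "s0 \<ge> 1"
    and carleman: "\<forall>A. isLinf (QT T) A \<longrightarrow>
       (\<forall>s. s \<ge> max (normLinf (QT T) A powr (2/3)) s0 \<longrightarrow>
         (\<forall>p\<in>P0 T. carleman_lhs T th lam0 psi s p \<le> C0 * ipP0 T \<omega> th lam0 psi A s p p))"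
  shows "\<exists>C>0. \<forall>A s B z0.
     isLinf (QT T) A \<and> s \<ge> max (normLinf (QT T) A powr (2/3)) s0
     \<and> isL2 (QT T) (\<lambda>y. rho0 th lam0 psi s y * B y) \<and> isL2 Omega z0 \<longrightarrow>
     (let ip = ipP0 T \<omega> th lam0 psi A s;
          solves = (\<lambda>X. \<forall>Y. P_Cauchy (P0 T) ip Y \<longrightarrow>
                          P_inner ip X Y = P_ext (rhs_functional T z0 B) Y);
          c = normLinf Omega (\<lambda>x. phi th lam0 psi s (x, 0))
      in \<exists>X. P_Cauchy (P0 T) ip X \<and> solves X
           \<and> (\<forall>Y. P_Cauchy (P0 T) ip Y \<and> solves Y \<longrightarrow> P_equiv ip X Y)
           \<and> P_norm ip X \<le> C * s powr (-3/2) *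
               (normL2 (QT T) (\<lambda>y. rho0 th lam0 psi s y * B y) + exp (c * s) * normL2 Omega z0))"
  apply (intro exI[of _ "sqrt (max C0 1) / lam0\<^sup>2"] conjI allI impI)
  subgoal using params(1) by simp
  subgoal premises H for A s B z0
  proof -
    have "s \<ge> 1" using H params(2) by linarith
    interpret carleman_source T T1 lam0 s psi th A \<omega> C0 z0 B
    proof
      show "continuous_on {0..1} psi" using psi(1) by (rule C1_differentiable_imp_continuous_on)
      show "\<omega> \<subseteq> Omega" using omega(3) closure_subset by blast
      show "carleman_lhs T th lam0 psi s p \<le> C0 * ipP0 T \<omega> th lam0 psi A s p p" if "p \<in> P0 T" for p
        using carleman H that by blast
    qed (use T psi theta params H \<open>s \<ge> 1\<close> omega(1) in auto)
    show ?thesis unfolding Let_def by (rule weak_solution_exists_unique)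
  qed
  done

end
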